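(* Let $X$ be a nontrivial real Hausdorff locally convex space, let $g\in\Gamma(X)$ be sublinear and let $x^{\ast}\in X^{\ast}$. Consider the assertions: (i) $[g\le x^{\ast}]=\{0\}$; (ii) $x^{\ast}\in\operatorname{qi}\partial g(0)$; (iii) $x^{\ast}\in\operatorname{core}\partial g(0)$; (iv) $x^{\ast}\in\operatorname{int}_\tau\partial g(0)$, where $\tau$ is a linear topology on $X^{\ast}$; (v) the topology of $X$ is defined by a norm $\|\cdot\|$ and $x^{\ast}\in\operatorname{int}_{\|\cdot\|_{\ast}}\partial g(0)$, where $\|\cdot\|_{\ast}$ is the dual norm on $X^{\ast}$; (vi) the topology of $X$ is defined by a norm $\|\cdot\|$ and there exists $\alpha>0$ such that $g(x)-\langle x,x^{\ast}\rangle\ge\alpha\|x\|$ for all $x\in X$. Then (vi) $\Leftrightarrow$ (v) $\Rightarrow$ (iv) $\Rightarrow$ (iii) $\Rightarrow$ (ii) $\Leftrightarrow$ (i); moreover, if $\dim X<\infty$ then (i) $\Rightarrow$ (vi).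
   Context: $X^{\ast}$ is the topological dual of $X$, endowed (unless another topology is indicated) with the weak$^{\ast}$ topology; $\langle x,x^{\ast}\rangle:=x^{\ast}(x)$. $\Gamma(X)$ is the set of proper lower semicontinuous convex functions. $\partial g(0)=\{u^{\ast}\in X^{\ast}: \langle x,u^{\ast}\rangle\le g(x)\ \forall x\}$. $[g\le x^{\ast}]:=\{x: g(x)\le\langle x,x^{\ast}\rangle\}$. For convex $B\subset X^{\ast}$, $\operatorname{qi}B=\{b\in B:\text{weak}^{\ast}\text{ closure of }\mathbb{R}_+(B-b)\text{ equals }X^{\ast}\}$. For a subset $A$ of a real linear space $E$, $\operatorname{core}A=\{x\in E:\forall u\in E\ \exists\delta>0\ \forall t\in[0,\delta]: x+tu\in A\}$. *)

theory Defs
  imports "HOL-Analysis.Analysis"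
begin

definition lin_top :: "'a::real_vector topology \<Rightarrow> bool" where
  "lin_top T \<longleftrightarrow> topspace T = UNIV
     \<and> continuous_map (prod_topology T T) T (\<lambda>(x,y). x + y)
     \<and> continuous_map (prod_topology euclideanreal T) T (\<lambda>(t,x). t *\<^sub>R x)"

definition hlcs :: "'a::real_vector topology \<Rightarrow> bool" where
  "hlcs T \<longleftrightarrow> lin_top T \<and> Hausdorff_space T
     \<and> (\<forall>U. openin T U \<and> 0 \<in> U \<longrightarrow> (\<exists>V. openin T V \<and> 0 \<in> V \<and> convex V \<and> V \<subseteq> U))"

definition dual :: "'a::real_vector topology \<Rightarrow> ('a \<Rightarrow> real) set" where
  "dual T = {f. linear f \<and> continuous_map T euclideanreal f}"

definition weak_star :: "'a::real_vector topology \<Rightarrow> ('a \<Rightarrow> real) topology" where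
  "weak_star T = subtopology (product_topology (\<lambda>_. euclideanreal) UNIV) (dual T)"

definition Gamma :: "'a::real_vector topology \<Rightarrow> ('a \<Rightarrow> ereal) \<Rightarrow> bool" where
  "Gamma T g \<longleftrightarrow> (\<forall>x. g x \<noteq> -\<infinity>) \<and> (\<exists>x. g x \<noteq> \<infinity>)
     \<and> (\<forall>c. closedin T {x. g x \<le> c})
     \<and> convex {(x, r::real). g x \<le> ereal r}"

definition sublinear :: "('a::real_vector \<Rightarrow> ereal) \<Rightarrow> bool" where
  "sublinear g \<longleftrightarrow> (\<forall>x y. g (x + y) \<le> g x + g y)
     \<and> (\<forall>t>0. \<forall>x. g (t *\<^sub>R x) = ereal t * g x)"

definition subdiff0 :: "'a::real_vector topology \<Rightarrow> ('a \<Rightarrow> ereal) \<Rightarrow> ('a \<Rightarrow> real) set" where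
  "subdiff0 T g = {u \<in> dual T. \<forall>x. ereal (u x) \<le> g x}"

definition below :: "('a \<Rightarrow> ereal) \<Rightarrow> ('a \<Rightarrow> real) \<Rightarrow> 'a set" where
  "below g xs = {x. g x \<le> ereal (xs x)}"

definition qi :: "'a::real_vector topology \<Rightarrow> ('a \<Rightarrow> real) set \<Rightarrow> ('a \<Rightarrow> real) set" where
  "qi T B = {b \<in> B. weak_star T closure_of
      {(\<lambda>x. t * (c x - b x)) | t c. t \<ge> 0 \<and> c \<in> B} = dual T}"

definition core_in :: "('a \<Rightarrow> real) set \<Rightarrow> ('a \<Rightarrow> real) set \<Rightarrow> ('a \<Rightarrow> real) set" where
  "core_in E A = {x \<in> E. \<forall>u \<in> E. \<exists>\<delta>>0. \<forall>t \<in> {0..\<delta>}. (\<lambda>y. x y + t * u y) \<in> A}"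

definition dual_lin_top :: "'a::real_vector topology \<Rightarrow> ('a \<Rightarrow> real) topology \<Rightarrow> bool" where
  "dual_lin_top T \<tau> \<longleftrightarrow> topspace \<tau> = dual T
     \<and> continuous_map (prod_topology \<tau> \<tau>) \<tau> (\<lambda>(f,h). (\<lambda>x. f x + h x))
     \<and> continuous_map (prod_topology euclideanreal \<tau>) \<tau> (\<lambda>(t,f). (\<lambda>x. t * f x))"

definition is_norm :: "('a::real_vector \<Rightarrow> real) \<Rightarrow> bool" where
  "is_norm N \<longleftrightarrow> (\<forall>x y. N (x + y) \<le> N x + N y) \<and> (\<forall>c x. N (c *\<^sub>R x) = \<bar>c\<bar> * N x)
     \<and> (\<forall>x. N x = 0 \<longrightarrow> x = 0)"

definition norm_top :: "('a::real_vector \<Rightarrow> real) \<Rightarrow> 'a topology" where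
  "norm_top N = topology (\<lambda>U. \<forall>x\<in>U. \<exists>e>0. \<forall>y. N (y - x) < e \<longrightarrow> y \<in> U)"

definition dual_norm :: "('a \<Rightarrow> real) \<Rightarrow> ('a \<Rightarrow> real) \<Rightarrow> real" where
  "dual_norm N f = Sup {\<bar>f x\<bar> | x. N x \<le> 1}"

end

theory Submission
  imports Defs "HOL-Library.Function_Algebras"
begin

(*
  A proper lsc sublinear g is the support function of dg(0): if g x > a, Hahn-Banach applied to
  the inf-convolution of g with a large multiple of the gauge of a small neighbourhood of 0 gives a
  continuous subgradient c with c x > a. Hence [g <= x*] is the polar in X of the feasible cone
  in X*, the cone generated by the differences c - x* with c in dg(0). A weak*-continuous
  functional depends on finitely many coordinates, so it is an evaluation at a point of X, and
  separating a functional from the cone produces a point of [g <= x*]. This gives (i) <-> (ii);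
  (iv) -> (iii) -> (ii) are immediate.

  In a normed space, x* + r B* lies in dg(0) iff g - x* >= r ||.|| (test with norming
  functionals), and the dual norm defines a linear topology on X*, whence (vi) <-> (v) -> (iv).
  In finite dimension every Hausdorff locally convex topology is the topology of the l1-norm of a
  basis; its unit sphere is compact and g - x* is lsc and positive there by (i), hence bounded
  below by some alpha > 0, and positive homogeneity gives (vi).
*)

section \<open>Hahn-Banach for real sublinear functionals\<close>

definition real_sublinear :: "('a::real_vector \<Rightarrow> real) \<Rightarrow> bool" where
  "real_sublinear p \<longleftrightarrow> (\<forall>x y. p (x + y) \<le> p x + p y) \<and> (\<forall>c>0. \<forall>x. p (c *\<^sub>R x) \<le> c * p x)"

lemma real_sublinear_add: "real_sublinear p \<Longrightarrow> p (x + y) \<le> p x + p y"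
  by (simp add: real_sublinear_def)

lemma real_sublinear_scale_le: "real_sublinear p \<Longrightarrow> c > 0 \<Longrightarrow> p (c *\<^sub>R x) \<le> c * p x"
  by (simp add: real_sublinear_def)

lemma real_sublinear_scale:
  assumes "real_sublinear p" "c > 0"
  shows "p (c *\<^sub>R x) = c * p x"
proof -
  have "p x = p (inverse c *\<^sub>R (c *\<^sub>R x))" using assms by simp
  also have "\<dots> \<le> inverse c * p (c *\<^sub>R x)" using assms by (intro real_sublinear_scale_le) auto
  finally have "c * p x \<le> p (c *\<^sub>R x)" using assms by (simp add: field_simps)
  with real_sublinear_scale_le[OF assms, of x] show ?thesis by linarith
qed

lemma real_sublinear_0: "real_sublinear p \<Longrightarrow> p 0 = 0"
  using real_sublinear_scale[of p 2 0] by simp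

lemma real_sublinear_minus_le: "real_sublinear p \<Longrightarrow> - p (- x) \<le> p x"
  using real_sublinear_add[of p x "- x"] real_sublinear_0[of p] by simp

lemma real_sublinear_extension_bound:
  assumes p: "real_sublinear p" and zero: "a \<le> p m"
    and below: "\<And>s. s > 0 \<Longrightarrow> s * a - p (s *\<^sub>R m - z) \<le> c"
    and above: "\<And>s. s > 0 \<Longrightarrow> c \<le> p (s *\<^sub>R m + z) - s * a"
  shows "a + t * c \<le> p (m + t *\<^sub>R z)"
proof -
  consider "t = 0" | "t > 0" | "t < 0" by linarith
  then show ?thesis
  proof cases
    case 1
    then show ?thesis using zero by simp
  next
    case 2
    have "t * c \<le> t * (p (inverse t *\<^sub>R m + z) - inverse t * a)"
      using above[of "inverse t"] 2 by (intro mult_left_mono) auto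
    also have "\<dots> = t * p (inverse t *\<^sub>R m + z) - a"
      using 2 by (simp add: right_diff_distrib)
    also have "\<dots> = p (t *\<^sub>R (inverse t *\<^sub>R m + z)) - a"
      by (simp only: real_sublinear_scale[OF p 2])
    finally show ?thesis using 2 by (simp add: scaleR_add_right)
  next
    case 3
    define s where "s = - t"
    have s: "s > 0" using 3 by (simp add: s_def)
    have "s * (inverse s * a - p (inverse s *\<^sub>R m - z)) \<le> s * c"
      using below[of "inverse s"] s by (intro mult_left_mono) auto
    then have "a - s * p (inverse s *\<^sub>R m - z) \<le> s * c"
      using s by (simp add: right_diff_distrib mult.assoc[symmetric])
    moreover have "s * p (inverse s *\<^sub>R m - z) = p (s *\<^sub>R (inverse s *\<^sub>R m - z))"
      by (simp only: real_sublinear_scale[OF p s])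
    moreover have "s *\<^sub>R (inverse s *\<^sub>R m - z) = m + t *\<^sub>R z" using s by (simp add: s_def scaleR_diff_right)
    ultimately show ?thesis by (simp add: s_def)
  qed
qed

text \<open>Graphs of partially defined linear functionals dominated by p, encoded as subspaces of
  pairs: such a subspace is a graph iff (0, a) in it forces a = 0.\<close>
definition dominated_graph :: "('a::real_vector \<Rightarrow> real) \<Rightarrow> ('a \<times> real) set \<Rightarrow> bool" where
  "dominated_graph p M \<longleftrightarrow> subspace M \<and> (\<forall>a. (0, a) \<in> M \<longrightarrow> a = 0) \<and> (\<forall>x a. (x, a) \<in> M \<longrightarrow> a \<le> p x)"

lemma dominated_graph_functional:
  assumes "dominated_graph p M" "(x, a) \<in> M" "(x, b) \<in> M"
  shows "a = b"
proof -
  have "(x, a) - (x, b) \<in> M" using assms by (intro subspace_diff) (auto simp: dominated_graph_def)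
  then show ?thesis using assms(1) by (auto simp: dominated_graph_def)
qed

lemma dominated_graph_span_singleton:
  assumes p: "real_sublinear p"
  shows "dominated_graph p (span {(y, p y)})"
proof -
  have "a = 0" if "(0, a) \<in> span {(y, p y)}" for a
    using that real_sublinear_0[OF p] by (cases "y = 0") (auto simp: span_singleton)
  moreover have "a \<le> p x" if "(x, a) \<in> span {(y, p y)}" for x a
  proof -
    have "(x, a) \<in> range (\<lambda>t. t *\<^sub>R (y, p y))" using that by (simp add: span_singleton)
    then obtain t where "x = 0 + t *\<^sub>R y" "a = 0 + t * p y" by auto
    moreover have "0 + t * p y \<le> p (0 + t *\<^sub>R y)"
      using real_sublinear_minus_le[OF p, of y]
      by (intro real_sublinear_extension_bound[OF p]) (simp_all add: real_sublinear_0[OF p])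
    ultimately show ?thesis by simp
  qed
  ultimately show ?thesis by (simp add: dominated_graph_def subspace_span)
qed

lemma dominated_graph_one_step:
  assumes p: "real_sublinear p" and M: "dominated_graph p M" and z: "\<And>a. (z, a) \<notin> M"
    and below: "\<And>m a. (m, a) \<in> M \<Longrightarrow> a - p (m - z) \<le> c"
    and above: "\<And>m a. (m, a) \<in> M \<Longrightarrow> c \<le> p (m + z) - a"
  shows "dominated_graph p {u + t *\<^sub>R (z, c) | u t. u \<in> M}"
    (is "dominated_graph p ?M'")
proof -
  have sub: "subspace M" using M by (simp add: dominated_graph_def)
  have "?M' = {u + v | u v. u \<in> M \<and> v \<in> span {(z, c)}}"
  proof (intro equalityI subsetI)
    fix w assume "w \<in> ?M'"
    then obtain u t where "u \<in> M" "w = u + t *\<^sub>R (z, c)" by blast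
    moreover have "t *\<^sub>R (z, c) \<in> span {(z, c)}" by (intro span_mul span_base) simp
    ultimately show "w \<in> {u + v | u v. u \<in> M \<and> v \<in> span {(z, c)}}" by blast
  next
    fix w assume "w \<in> {u + v | u v. u \<in> M \<and> v \<in> span {(z, c)}}"
    then obtain u v where "u \<in> M" "v \<in> span {(z, c)}" "w = u + v" by blast
    moreover obtain t where "v = t *\<^sub>R (z, c)" using \<open>v \<in> span {(z, c)}\<close> by (auto simp: span_singleton)
    ultimately show "w \<in> ?M'" by blast
  qed
  then have M'_subspace: "subspace ?M'" using subspace_sums[OF sub subspace_span] by simp
  have decompose: "\<exists>m a0 t. (m, a0) \<in> M \<and> x = m + t *\<^sub>R z \<and> a = a0 + t * c" if xa: "(x, a) \<in> ?M'" for x a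
  proof -
    obtain u t where "u \<in> M" "(x, a) = u + t *\<^sub>R (z, c)" using xa by blast
    then show ?thesis by (cases u) auto
  qed
  have "a = 0" if a0: "(0, a) \<in> ?M'" for a
  proof -
    obtain m a0 t where h: "(m, a0) \<in> M" "0 = m + t *\<^sub>R z" "a = a0 + t * c"
      using decompose[OF a0] by blast
    have "t = 0"
    proof (rule ccontr)
      assume "t \<noteq> 0"
      then have "z = (- inverse t) *\<^sub>R m"
        using h(2) by (simp add: eq_neg_iff_add_eq_0[symmetric] algebra_simps)
      moreover have "(- inverse t) *\<^sub>R (m, a0) \<in> M" using subspace_scale[OF sub h(1)] by blast
      ultimately show False using z by simp
    qed
    then show ?thesis using h M by (auto simp: dominated_graph_def)
  qed
  moreover have "a \<le> p x" if xa: "(x, a) \<in> ?M'" for x a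
  proof -
    obtain m a0 t where h: "(m, a0) \<in> M" "x = m + t *\<^sub>R z" "a = a0 + t * c"
      using decompose[OF xa] by blast
    have scaled: "(s *\<^sub>R m, s * a0) \<in> M" for s using subspace_scale[OF sub h(1)] by simp
    have "a0 + t * c \<le> p (m + t *\<^sub>R z)"
    proof (rule real_sublinear_extension_bound[OF p])
      show "a0 \<le> p m" using h(1) M by (simp add: dominated_graph_def)
      show "s * a0 - p (s *\<^sub>R m - z) \<le> c" for s using below[OF scaled[of s]] .
      show "c \<le> p (s *\<^sub>R m + z) - s * a0" for s using above[OF scaled[of s]] .
    qed
    then show ?thesis using h by simp
  qed
  ultimately show ?thesis using M'_subspace by (simp add: dominated_graph_def)
qed

lemma dominated_graph_extend:
  assumes p: "real_sublinear p" and M: "dominated_graph p M" and z: "\<And>a. (z, a) \<notin> M"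
  shows "\<exists>M'. dominated_graph p M' \<and> M \<subset> M'"
proof -
  have sub: "subspace M" using M by (simp add: dominated_graph_def)
  \<comment> \<open>The admissible values at z form the nonempty interval between these two families of bounds.\<close>
  have key: "a - p (m - z) \<le> p (m' + z) - a'" if "(m, a) \<in> M" "(m', a') \<in> M" for m a m' a'
  proof -
    have "a + a' \<le> p (m + m')"
      using subspace_add[OF sub that] M by (simp add: dominated_graph_def)
    also have "\<dots> \<le> p (m - z) + p (m' + z)"
      using real_sublinear_add[OF p, of "m - z" "m' + z"] by simp
    finally show ?thesis by simp
  qed
  define S where "S = {a - p (m - z) | m a. (m, a) \<in> M}"
  have "(0, 0) \<in> M" using subspace_0[OF sub] by (simp add: zero_prod_def)
  then have "S \<noteq> {}" "bdd_above S" unfolding S_def bdd_above_def using key by blast+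
  define M' where "M' = {u + t *\<^sub>R (z, Sup S) | u t. u \<in> M}"
  have "dominated_graph p M'" unfolding M'_def
  proof (rule dominated_graph_one_step[OF p M z])
    show "a - p (m - z) \<le> Sup S" if "(m, a) \<in> M" for m a
      using \<open>bdd_above S\<close> that by (intro cSup_upper) (auto simp: S_def)
    show "Sup S \<le> p (m + z) - a" if "(m, a) \<in> M" for m a
      using \<open>S \<noteq> {}\<close> that key by (intro cSup_least) (auto simp: S_def)
  qed
  moreover have "M \<subseteq> M'"
  proof
    fix u assume "u \<in> M"
    moreover have "u = u + 0 *\<^sub>R (z, Sup S)" by (simp add: zero_prod_def)
    ultimately show "u \<in> M'" unfolding M'_def by blast
  qed
  moreover have "(z, Sup S) = (0, 0) + 1 *\<^sub>R (z, Sup S)" by (simp add: zero_prod_def)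
  then have "(z, Sup S) \<in> M'" using \<open>(0, 0) \<in> M\<close> unfolding M'_def by blast
  moreover have "(z, Sup S) \<notin> M" by (rule z)
  ultimately show ?thesis by blast
qed

lemma dominated_graph_Union_chain:
  assumes "C \<noteq> {}" "\<And>M. M \<in> C \<Longrightarrow> dominated_graph p M" "\<And>M M'. M \<in> C \<Longrightarrow> M' \<in> C \<Longrightarrow> M \<subseteq> M' \<or> M' \<subseteq> M"
  shows "dominated_graph p (\<Union>C)"
proof -
  have sub: "subspace M" if "M \<in> C" for M using assms(2)[OF that] by (simp add: dominated_graph_def)
  have "subspace (\<Union>C)"
    unfolding subspace_def
  proof (intro conjI ballI allI)
    obtain M where "M \<in> C" using assms(1) by blast
    then show "0 \<in> \<Union>C" using subspace_0[OF sub] by blast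
  next
    fix u v assume "u \<in> \<Union>C" "v \<in> \<Union>C"
    then obtain M where "M \<in> C" "u \<in> M" "v \<in> M" using assms(3) by blast
    then show "u + v \<in> \<Union>C" using subspace_add[OF sub] by blast
  next
    fix r u assume "u \<in> \<Union>C"
    then obtain M where "M \<in> C" "u \<in> M" by blast
    then show "r *\<^sub>R u \<in> \<Union>C" using subspace_scale[OF sub] by blast
  qed
  then show ?thesis using assms(2) by (auto simp: dominated_graph_def)
qed

lemma dominated_graph_total_imp_linear:
  assumes M: "dominated_graph p M" and total: "\<And>x. \<exists>a. (x, a) \<in> M"
  shows "\<exists>F. linear F \<and> (\<forall>x. F x \<le> p x) \<and> (\<forall>x a. (x, a) \<in> M \<longrightarrow> F x = a)"
proof -
  define F where "F x = (THE a. (x, a) \<in> M)" for x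
  have FM: "(x, F x) \<in> M" for x
  proof -
    obtain a where "(x, a) \<in> M" using total by blast
    then have "\<exists>!a. (x, a) \<in> M" using dominated_graph_functional[OF M] by blast
    then show ?thesis unfolding F_def by (rule theI')
  qed
  have F_eq: "F x = a" if "(x, a) \<in> M" for x a
    using dominated_graph_functional[OF M FM that] .
  have sub: "subspace M" using M by (simp add: dominated_graph_def)
  have "linear F"
  proof (rule linearI)
    show "F (x1 + x2) = F x1 + F x2" for x1 x2
      using subspace_add[OF sub FM FM] by (intro F_eq) simp
    show "F (r *\<^sub>R x) = r *\<^sub>R F x" for r x
      using subspace_scale[OF sub FM, of r] by (intro F_eq) simp
  qed
  moreover have "F x \<le> p x" for x using FM[of x] M by (simp add: dominated_graph_def)
  ultimately show ?thesis using F_eq by blast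
qed

theorem hahn_banach_sublinear:
  assumes p: "real_sublinear p"
  shows "\<exists>F. linear F \<and> (\<forall>x. F x \<le> p x) \<and> F y = p y"
proof -
  define A where "A = {M. dominated_graph p M \<and> (y, p y) \<in> M}"
  have "\<exists>M\<in>A. \<forall>M'\<in>A. M \<subseteq> M' \<longrightarrow> M' = M"
  proof (rule Zorn_Lemma2, intro ballI)
    fix C assume C: "C \<in> chains A"
    show "\<exists>U\<in>A. \<forall>M\<in>C. M \<subseteq> U"
    proof (cases "C = {}")
      case True
      have "span {(y, p y)} \<in> A"
        using dominated_graph_span_singleton[OF p] by (simp add: A_def span_base)
      then show ?thesis using True by blast
    next
      case False
      have "dominated_graph p (\<Union>C)"
        using False chainsD2[OF C] chainsD[OF C]
          by (intro dominated_graph_Union_chain) (auto simp: A_def)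
      moreover have "(y, p y) \<in> \<Union>C" using False chainsD2[OF C] by (auto simp: A_def)
      ultimately show ?thesis by (auto simp: A_def)
    qed
  qed
  then obtain M where M: "dominated_graph p M" "(y, p y) \<in> M"
    and maximal: "\<And>M'. dominated_graph p M' \<Longrightarrow> M \<subset> M' \<Longrightarrow> False"
    unfolding A_def by blast
  have "\<exists>a. (x, a) \<in> M" for x
    using dominated_graph_extend[OF p M(1), of x] maximal by blast
  then show ?thesis using dominated_graph_total_imp_linear[OF M(1)] M(2) by blast
qed

section \<open>Minkowski gauges and linear topologies\<close>

definition absorbing :: "'a::real_vector set \<Rightarrow> bool" where
  "absorbing V \<longleftrightarrow> (\<forall>x. \<exists>t>0. inverse t *\<^sub>R x \<in> V)"

definition minkowski_gauge :: "'a::real_vector set \<Rightarrow> 'a \<Rightarrow> real" where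
  "minkowski_gauge V x = Inf {t. t > 0 \<and> inverse t *\<^sub>R x \<in> V}"

context
  fixes V :: "'a::real_vector set"
  assumes convex: "convex V" and zero: "0 \<in> V" and absorbing: "absorbing V"
begin

private lemma gauge_set_nonempty: "{t. t > 0 \<and> inverse t *\<^sub>R x \<in> V} \<noteq> {}"
  using absorbing unfolding absorbing_def by auto

private lemma gauge_set_bdd_below: "bdd_below {t. t > 0 \<and> inverse t *\<^sub>R x \<in> V}"
  by (rule bdd_belowI[of _ 0]) auto

private lemma gauge_set_upward_closed:
  assumes "t > 0" "inverse t *\<^sub>R x \<in> V" "s \<ge> t"
  shows "inverse s *\<^sub>R x \<in> V"
proof -
  have "(t / s) *\<^sub>R (inverse t *\<^sub>R x) + (1 - t / s) *\<^sub>R 0 \<in> V"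
    using assms zero by (intro convexD[OF convex]) auto
  moreover have "(t / s) * inverse t = inverse s" using assms by (simp add: field_simps)
  ultimately show ?thesis by (metis add_0_right scaleR_scaleR scaleR_zero_right)
qed

lemma minkowski_gauge_nonneg: "0 \<le> minkowski_gauge V x"
  unfolding minkowski_gauge_def by (rule cInf_greatest[OF gauge_set_nonempty]) auto

lemma minkowski_gauge_le: "t > 0 \<Longrightarrow> inverse t *\<^sub>R x \<in> V \<Longrightarrow> minkowski_gauge V x \<le> t"
  unfolding minkowski_gauge_def by (rule cInf_lower[OF _ gauge_set_bdd_below]) auto

lemma minkowski_gauge_less:
  assumes "minkowski_gauge V x < s"
  shows "s > 0" "inverse s *\<^sub>R x \<in> V"
proof -
  show "s > 0" using assms minkowski_gauge_nonneg[of x] by linarith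
  obtain t where "t > 0" "inverse t *\<^sub>R x \<in> V" "t < s"
    using cInf_lessD[OF gauge_set_nonempty assms[unfolded minkowski_gauge_def]] by blast
  then show "inverse s *\<^sub>R x \<in> V" using gauge_set_upward_closed[of t x s] by simp
qed

lemma minkowski_gauge_less_1_imp_mem: "minkowski_gauge V x < 1 \<Longrightarrow> x \<in> V"
  using minkowski_gauge_less(2)[of x 1] by simp

lemma minkowski_gauge_le_1_if_mem: "x \<in> V \<Longrightarrow> minkowski_gauge V x \<le> 1"
  using minkowski_gauge_le[of 1 x] by simp

lemma real_sublinear_minkowski_gauge: "real_sublinear (minkowski_gauge V)"
  unfolding real_sublinear_def
proof (intro conjI allI impI)
  fix x y
  show "minkowski_gauge V (x + y) \<le> minkowski_gauge V x + minkowski_gauge V y"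
  proof (rule field_le_epsilon)
    fix e :: real assume e: "e > 0"
    define s where "s = minkowski_gauge V x + e / 2"
    define t where "t = minkowski_gauge V y + e / 2"
    have s: "s > 0" "inverse s *\<^sub>R x \<in> V" using minkowski_gauge_less[of x s] e by (auto simp: s_def)
    have t: "t > 0" "inverse t *\<^sub>R y \<in> V" using minkowski_gauge_less[of y t] e by (auto simp: t_def)
    \<comment> \<open>x + y, shrunk by s + t, is a convex combination of the two shrunk points.\<close>
    have "(s / (s + t)) *\<^sub>R (inverse s *\<^sub>R x) + (t / (s + t)) *\<^sub>R (inverse t *\<^sub>R y) \<in> V"
      using s t by (intro convexD[OF convex]) (simp_all add: add_divide_distrib[symmetric])
    moreover have "(s / (s + t)) * inverse s = inverse (s + t)"
      "(t / (s + t)) * inverse t = inverse (s + t)"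
      using s t by (simp_all add: field_simps)
    ultimately have "inverse (s + t) *\<^sub>R (x + y) \<in> V" by (simp add: scaleR_add_right)
    then have "minkowski_gauge V (x + y) \<le> s + t" using s t by (intro minkowski_gauge_le) auto
    then show "minkowski_gauge V (x + y) \<le> minkowski_gauge V x + minkowski_gauge V y + e"
      by (simp add: s_def t_def)
  qed
next
  fix c :: real and x assume c: "c > 0"
  show "minkowski_gauge V (c *\<^sub>R x) \<le> c * minkowski_gauge V x"
  proof (rule field_le_epsilon)
    fix e :: real assume e: "e > 0"
    define s where "s = minkowski_gauge V x + e / c"
    have s: "s > 0" "inverse s *\<^sub>R x \<in> V" using minkowski_gauge_less[of x s] e c by (auto simp: s_def)
    have "inverse (c * s) *\<^sub>R (c *\<^sub>R x) = inverse s *\<^sub>R x" using c by simp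
    with s(2) have "inverse (c * s) *\<^sub>R (c *\<^sub>R x) \<in> V" by (simp only:)
    then have "minkowski_gauge V (c *\<^sub>R x) \<le> c * s"
      using s c by (intro minkowski_gauge_le) auto
    moreover have "c * s = c * minkowski_gauge V x + e" using c by (simp add: s_def field_simps)
    ultimately show "minkowski_gauge V (c *\<^sub>R x) \<le> c * minkowski_gauge V x + e" by linarith
  qed
qed

end

lemma lin_top_topspace: "lin_top T \<Longrightarrow> topspace T = UNIV"
  by (simp add: lin_top_def)

lemma continuous_map_lin_top_add:
  assumes "lin_top T" "continuous_map X T f" "continuous_map X T g"
  shows "continuous_map X T (\<lambda>x. f x + g x)"
proof -
  have "continuous_map X T ((\<lambda>(x, y). x + y) \<circ> (\<lambda>x. (f x, g x)))"
    using assms by (intro continuous_map_compose[OF continuous_map_pairedI]) (auto simp: lin_top_def)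
  then show ?thesis by (simp add: o_def)
qed

lemma continuous_map_lin_top_scaleR:
  assumes "lin_top T" "continuous_map X euclideanreal c" "continuous_map X T f"
  shows "continuous_map X T (\<lambda>x. c x *\<^sub>R f x)"
proof -
  have "continuous_map X T ((\<lambda>(t, x). t *\<^sub>R x) \<circ> (\<lambda>x. (c x, f x)))"
    using assms by (intro continuous_map_compose[OF continuous_map_pairedI]) (auto simp: lin_top_def)
  then show ?thesis by (simp add: o_def)
qed

lemma openin_lin_top_affine_preimage:
  assumes "lin_top T" "openin T V"
  shows "openin T {y. a *\<^sub>R y + b \<in> V}"
proof -
  have "continuous_map T T (\<lambda>y. a *\<^sub>R y)"
    using continuous_map_lin_top_scaleR[OF assms(1), of T "\<lambda>_. a" id]
      by (simp add: lin_top_topspace[OF assms(1)])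
  then have "continuous_map T T (\<lambda>y. a *\<^sub>R y + b)"
    using continuous_map_lin_top_add[OF assms(1), of T _ "\<lambda>_. b"]
      by (simp add: lin_top_topspace[OF assms(1)])
  from openin_continuous_map_preimage[OF this assms(2)] show ?thesis
    using lin_top_topspace[OF assms(1)] by simp
qed

lemma lin_top_small_multiples_in_nhd:
  assumes "lin_top T" "openin T V" "0 \<in> V"
  shows "\<exists>e>0. \<forall>t. \<bar>t\<bar> < e \<longrightarrow> t *\<^sub>R x \<in> V"
proof -
  have "continuous_map euclideanreal T (\<lambda>t. t *\<^sub>R x)"
    using continuous_map_lin_top_scaleR[OF assms(1), of euclideanreal id "\<lambda>_. x"]
    by (simp add: lin_top_topspace[OF assms(1)])
  from openin_continuous_map_preimage[OF this assms(2)]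
  have "open {t. t *\<^sub>R x \<in> V}" by simp
  moreover have "0 \<in> {t. t *\<^sub>R x \<in> V}" using assms(3) by simp
  ultimately obtain e where "e > 0" "ball 0 e \<subseteq> {t. t *\<^sub>R x \<in> V}"
    using open_contains_ball by blast
  then show ?thesis by (intro exI[of _ e]) (auto simp: dist_real_def subset_iff)
qed

lemma absorbing_lin_top_nhd:
  assumes "lin_top T" "openin T V" "0 \<in> V"
  shows "absorbing V"
  unfolding absorbing_def
proof
  fix x
  obtain e where "e > 0" "\<And>t. \<bar>t\<bar> < e \<Longrightarrow> t *\<^sub>R x \<in> V"
    using lin_top_small_multiples_in_nhd[OF assms] by blast
  then have "inverse (2 / e) *\<^sub>R x \<in> V" by simp
  then show "\<exists>t>0. inverse t *\<^sub>R x \<in> V" using \<open>e > 0\<close> by (intro exI[of _ "2 / e"]) simp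
qed

lemma hlcs_symmetric_convex_nhd:
  assumes "hlcs T" "openin T U" "0 \<in> U"
  obtains V where "openin T V" "0 \<in> V" "convex V" "\<And>v. v \<in> V \<Longrightarrow> - v \<in> V" "V \<subseteq> U"
proof -
  have lt: "lin_top T" using assms(1) by (simp add: hlcs_def)
  obtain V0 where V0: "openin T V0" "0 \<in> V0" "convex V0" "V0 \<subseteq> U"
    using assms by (auto simp: hlcs_def)
  define V where "V = V0 \<inter> {y. - y \<in> V0}"
  have "openin T {y. - y \<in> V0}" using openin_lin_top_affine_preimage[OF lt V0(1), of "- 1" 0] by simp
  then have "openin T V" unfolding V_def using V0(1) by (intro openin_Int)
  have "{y. - y \<in> V0} = uminus ` V0" by (force simp: image_iff)
  then have "convex V" unfolding V_def using V0(3) by (simp add: convex_Int convex_negations)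
  then show ?thesis using V0 \<open>openin T V\<close> that[of V] by (auto simp: V_def)
qed

lemma continuous_map_real_iff_ball:
  "continuous_map X euclideanreal f \<longleftrightarrow>
    (\<forall>x\<in>topspace X. \<forall>e>0. \<exists>U. openin X U \<and> x \<in> U \<and> (\<forall>y\<in>U. \<bar>f y - f x\<bar> < e))"
  using Met_TC.continuous_map_to_metric[of X f] by (simp add: dist_real_def abs_minus_commute)

lemma continuous_map_linear_bounded_on_nhd:
  assumes lt: "lin_top T" and F: "linear F"
    and V: "openin T V" "0 \<in> V" "\<And>v. v \<in> V \<Longrightarrow> - v \<in> V" and bound: "\<And>v. v \<in> V \<Longrightarrow> F v \<le> C"
  shows "continuous_map T euclideanreal F"
  unfolding continuous_map_real_iff_ball
proof (intro ballI allI impI)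
  fix x and e :: real assume "e > 0"
  have C: "C \<ge> 0" using bound[OF V(2)] linear_0[OF F] by simp
  define r where "r = e / (C + 1)"
  have r: "r > 0" using C \<open>e > 0\<close> by (simp add: r_def)
  define W where "W = {y. inverse r *\<^sub>R y + (- inverse r *\<^sub>R x) \<in> V}"
  have "\<bar>F y - F x\<bar> < e" if "y \<in> W" for y
  proof -
    have v: "inverse r *\<^sub>R (y - x) \<in> V" using that by (simp add: W_def scaleR_diff_right)
    have "F (inverse r *\<^sub>R (y - x)) = inverse r * (F y - F x)"
      using F by (simp add: linear_scale linear_diff)
    then have "\<bar>inverse r * (F y - F x)\<bar> \<le> C"
      using bound[OF v] bound[OF V(3)[OF v]] linear_neg[OF F] by (simp add: abs_le_iff)
    then have "\<bar>F y - F x\<bar> \<le> C * r" using r by (simp add: abs_mult field_simps)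
    also have "C * r < e" using C \<open>e > 0\<close> by (simp add: r_def field_simps)
    finally show ?thesis .
  qed
  moreover have "x \<in> W" using V(2) by (simp add: W_def)
  ultimately show "\<exists>W. openin T W \<and> x \<in> W \<and> (\<forall>y\<in>W. \<bar>F y - F x\<bar> < e)"
    using openin_lin_top_affine_preimage[OF lt V(1)] unfolding W_def by blast
qed

section \<open>Separation\<close>

lemma real_sublinear_inf_convolution:
  fixes p \<phi> :: "'a::real_vector \<Rightarrow> real"
  assumes p: "real_sublinear p"
    and D: "0 \<in> D" "\<And>y z. y \<in> D \<Longrightarrow> z \<in> D \<Longrightarrow> y + z \<in> D" "\<And>c y. c > 0 \<Longrightarrow> y \<in> D \<Longrightarrow> c *\<^sub>R y \<in> D"
    and \<phi>: "\<And>y z. y \<in> D \<Longrightarrow> z \<in> D \<Longrightarrow> \<phi> (y + z) \<le> \<phi> y + \<phi> z"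
      "\<And>c y. c > 0 \<Longrightarrow> y \<in> D \<Longrightarrow> \<phi> (c *\<^sub>R y) \<le> c * \<phi> y"
    and bdd: "\<And>v. bdd_below ((\<lambda>y. \<phi> y + p (v - y)) ` D)"
  shows "real_sublinear (\<lambda>v. INF y\<in>D. \<phi> y + p (v - y))"
    (is "real_sublinear ?q")
proof -
  have q_le: "?q v \<le> \<phi> y + p (v - y)" if "y \<in> D" for v y
    by (rule cINF_lower[OF bdd that])
  have q_approx: "\<exists>y\<in>D. \<phi> y + p (v - y) < ?q v + e" if "e > 0" for v e
    using cINF_less_iff[OF _ bdd, of v "?q v + e"] D(1) that by auto
  show ?thesis
    unfolding real_sublinear_def
  proof (intro conjI allI impI)
    fix v w
    show "?q (v + w) \<le> ?q v + ?q w"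
    proof (rule field_le_epsilon)
      fix e :: real assume "e > 0"
      then have "e / 2 > 0" by simp
      then obtain y z where y: "y \<in> D" "\<phi> y + p (v - y) < ?q v + e / 2"
        and z: "z \<in> D" "\<phi> z + p (w - z) < ?q w + e / 2"
        using q_approx by blast
      have "?q (v + w) \<le> \<phi> (y + z) + p ((v - y) + (w - z))"
        using q_le[OF D(2)[OF y(1) z(1)]] by (simp add: algebra_simps)
      also have "\<dots> \<le> (\<phi> y + p (v - y)) + (\<phi> z + p (w - z))"
        using \<phi>(1)[OF y(1) z(1)] real_sublinear_add[OF p, of "v - y" "w - z"] by linarith
      finally show "?q (v + w) \<le> ?q v + ?q w + e" using y z by linarith
    qed
  next
    fix c :: real and v assume c: "c > 0"
    show "?q (c *\<^sub>R v) \<le> c * ?q v"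
    proof (rule field_le_epsilon)
      fix e :: real assume "e > 0"
      then obtain y where y: "y \<in> D" "\<phi> y + p (v - y) < ?q v + e / c"
        using q_approx[of "e / c"] c by auto
      have "?q (c *\<^sub>R v) \<le> \<phi> (c *\<^sub>R y) + p (c *\<^sub>R (v - y))"
        using q_le[OF D(3)[OF c y(1)]] by (simp add: scaleR_diff_right)
      also have "\<dots> \<le> c * (\<phi> y + p (v - y))"
        using \<phi>(2)[OF c y(1)] real_sublinear_scale[OF p c] by (simp add: distrib_left)
      also have "\<dots> \<le> c * ?q v + e"
        using y(2) c by (simp add: field_simps)
      finally show "?q (c *\<^sub>R v) \<le> c * ?q v + e" .
    qed
  qed
qed

lemma convex_cone_separation:
  fixes p :: "'a::real_vector \<Rightarrow> real"
  assumes p: "real_sublinear p" and p_nonneg: "\<And>v. p v \<ge> 0"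
    and K: "0 \<in> K" "\<And>a b. a \<in> K \<Longrightarrow> b \<in> K \<Longrightarrow> a + b \<in> K" "\<And>s a. s > 0 \<Longrightarrow> a \<in> K \<Longrightarrow> s *\<^sub>R a \<in> K"
    and far: "\<And>k. k \<in> K \<Longrightarrow> p (z - k) \<ge> 1"
  shows "\<exists>F. linear F \<and> (\<forall>v. F v \<le> p v) \<and> (\<forall>k\<in>K. F k \<le> 0) \<and> F z \<ge> 1"
proof -
  define q where "q v = (INF k\<in>K. 0 + p (v - k))" for v
  have bdd: "bdd_below ((\<lambda>k. 0 + p (v - k)) ` K)" for v
    using p_nonneg by (intro bdd_belowI[of _ 0]) auto
  have "real_sublinear q"
    unfolding q_def by (rule real_sublinear_inf_convolution[OF p K]) (use bdd in simp_all)
  then obtain F where F: "linear F" "\<And>v. F v \<le> q v" "F z = q z"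
    using hahn_banach_sublinear by blast
  have q_le: "q v \<le> p (v - k)" if "k \<in> K" for v k
    unfolding q_def using cINF_lower[OF bdd that] by simp
  have "1 \<le> q z" unfolding q_def using K(1) far by (intro cINF_greatest) auto
  moreover have "F v \<le> p v" for v using F(2)[of v] q_le[OF K(1), of v] by simp
  moreover have "F k \<le> 0" if "k \<in> K" for k
    using F(2)[of k] q_le[OF that, of k] real_sublinear_0[OF p] by simp
  ultimately show ?thesis using F by auto
qed

lemma dual_linear: "f \<in> dual T \<Longrightarrow> linear f"
  by (simp add: dual_def)

lemma dual_continuous: "f \<in> dual T \<Longrightarrow> continuous_map T euclideanreal f"
  by (simp add: dual_def)

lemma dual_add: "f \<in> dual T \<Longrightarrow> h \<in> dual T \<Longrightarrow> (\<lambda>x. f x + h x) \<in> dual T"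
  unfolding dual_def
  by (auto intro!: linearI continuous_map_add simp: linear_add linear_scale algebra_simps)

lemma dual_cmult: "f \<in> dual T \<Longrightarrow> (\<lambda>x. c * f x) \<in> dual T"
  unfolding dual_def
  by (auto intro!: linearI continuous_map_real_mult_left simp: linear_add linear_scale algebra_simps)

lemma dual_diff: "f \<in> dual T \<Longrightarrow> h \<in> dual T \<Longrightarrow> (\<lambda>x. f x - h x) \<in> dual T"
  unfolding dual_def
  by (auto intro!: linearI continuous_map_diff simp: linear_add linear_scale algebra_simps)

lemma hlcs_separating_functional:
  assumes T: "hlcs T" and "x \<noteq> 0"
  shows "\<exists>F\<in>dual T. F x \<ge> 1"
proof -
  have lt: "lin_top T" using T by (simp add: hlcs_def)
  have "Hausdorff_space T" using T by (simp add: hlcs_def)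
  then obtain U W where "openin T U" "openin T W" "0 \<in> U" "x \<in> W" "disjnt U W"
    using \<open>x \<noteq> 0\<close> lin_top_topspace[OF lt] unfolding Hausdorff_space_def by (metis UNIV_I)
  then obtain V where V: "openin T V" "0 \<in> V" "convex V" "\<And>v. v \<in> V \<Longrightarrow> - v \<in> V" "V \<subseteq> U"
    using hlcs_symmetric_convex_nhd[OF T, of U] by blast
  have "x \<notin> V" using V(5) \<open>x \<in> W\<close> \<open>disjnt U W\<close> by (auto simp: disjnt_def)
  have ab: "absorbing V" by (rule absorbing_lin_top_nhd[OF lt V(1,2)])
  obtain F where F: "linear F" "\<And>v. F v \<le> minkowski_gauge V v" "F x = minkowski_gauge V x"
    using hahn_banach_sublinear[OF real_sublinear_minkowski_gauge[OF V(3,2) ab]] by blast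
  have F_le_1: "F v \<le> 1" if "v \<in> V" for v
    using F(2)[of v] minkowski_gauge_le_1_if_mem[OF V(3,2) ab that] by linarith
  have "continuous_map T euclideanreal F"
    using continuous_map_linear_bounded_on_nhd[OF lt F(1) V(1,2,4) F_le_1] .
  moreover have "F x \<ge> 1"
    using minkowski_gauge_less_1_imp_mem[OF V(3,2) ab, of x] \<open>x \<notin> V\<close> F(3) by linarith
  ultimately show ?thesis using F(1) unfolding dual_def by blast
qed

section \<open>Proper lsc sublinear functions as support functions\<close>

lemma real_sublinear_cmult:
  assumes "real_sublinear p" "M \<ge> 0"
  shows "real_sublinear (\<lambda>v. M * p v)"
  unfolding real_sublinear_def
proof (intro conjI allI impI)
  show "M * p (x + y) \<le> M * p x + M * p y" for x y
    using mult_left_mono[OF real_sublinear_add[OF assms(1)] assms(2)] by (simp add: distrib_left)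
  show "M * p (c *\<^sub>R x) \<le> c * (M * p x)" if "c > 0" for c x
    using real_sublinear_scale[OF assms(1) that] by simp
qed

lemma linear_le_minkowski_gauge:
  assumes V: "convex V" "0 \<in> V" "absorbing V" and f: "linear f" and less: "\<And>v. v \<in> V \<Longrightarrow> f v < 1"
  shows "f u \<le> minkowski_gauge V u"
proof (rule field_le_epsilon)
  fix e :: real assume "e > 0"
  define s where "s = minkowski_gauge V u + e"
  have s: "0 < s" "inverse s *\<^sub>R u \<in> V"
    using minkowski_gauge_less[OF V, of u s] \<open>e > 0\<close> by (auto simp: s_def)
  have "inverse s * f u < 1" using less[OF s(2)] linear_scale[OF f, of "inverse s" u] by simp
  then show "f u \<le> minkowski_gauge V u + e" using s(1) by (simp add: s_def field_simps)
qed

locale lsc_sublinear =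
  fixes T :: "'a::real_vector topology" and g :: "'a \<Rightarrow> ereal"
  assumes hlcs: "hlcs T" and Gamma: "Gamma T g" and sublinear: "sublinear g"
begin

lemma lin_top: "lin_top T"
  using hlcs by (simp add: hlcs_def)

lemma add_le: "g (x + y) \<le> g x + g y"
  using sublinear by (simp add: sublinear_def)

lemma scale: "t > 0 \<Longrightarrow> g (t *\<^sub>R x) = ereal t * g x"
  using sublinear by (simp add: sublinear_def)

lemma not_MInf: "g x \<noteq> - \<infinity>"
  using Gamma by (simp add: Gamma_def)

lemma openin_superlevel: "openin T {x. c < g x}"
proof -
  have "openin T (topspace T - {x. g x \<le> c})"
    using Gamma by (intro openin_diff) (auto simp: Gamma_def)
  moreover have "topspace T - {x. g x \<le> c} = {x. c < g x}"
    using lin_top_topspace[OF lin_top] by auto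
  ultimately show ?thesis by simp
qed

lemma zero: "g 0 = 0"
proof -
  obtain x r where gx: "g x = ereal r"
    using Gamma not_MInf by (auto simp: Gamma_def) (metis ereal_cases)
  \<comment> \<open>If g 0 were infinite, lower semicontinuity would force g to be large on small multiples of x.\<close>
  have "g 0 \<noteq> \<infinity>"
  proof
    assume "g 0 = \<infinity>"
    then have "0 \<in> {y. ereal (\<bar>r\<bar> + 1) < g y}" by simp
    then obtain e where e: "e > 0" "\<And>t. \<bar>t\<bar> < e \<Longrightarrow> ereal (\<bar>r\<bar> + 1) < g (t *\<^sub>R x)"
      using lin_top_small_multiples_in_nhd[OF lin_top openin_superlevel] by blast
    define t where "t = min (e / 2) (1 / 2)"
    have t: "t > 0" "\<bar>t\<bar> < e" "t \<le> 1" using e by (auto simp: t_def)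
    have "t * r \<le> \<bar>r\<bar> + 1"
      using t mult_left_mono[of r "\<bar>r\<bar>" t] mult_right_mono[of t 1 "\<bar>r\<bar>"] by linarith
    then show False using e(2)[OF t(2)] scale[OF t(1), of x] gx by simp
  qed
  then obtain a where a: "g 0 = ereal a" using not_MInf[of 0] by (cases "g 0") auto
  have "g 0 = ereal 2 * g 0" using scale[of 2 0] by simp
  then show ?thesis using a by (simp add: zero_ereal_def)
qed

lemma mem_subdiff0_if_bounded_on_nhd:
  assumes F: "linear F" "\<And>v. ereal (F v) \<le> g v"
    and V: "openin T V" "0 \<in> V" "\<And>v. v \<in> V \<Longrightarrow> - v \<in> V" and bound: "\<And>v. v \<in> V \<Longrightarrow> F v \<le> C"
  shows "F \<in> subdiff0 T g"
  using continuous_map_linear_bounded_on_nhd[OF lin_top F(1) V bound] F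
    by (simp add: subdiff0_def dual_def)

lemma inf_convolution_sublinear:
  assumes p: "real_sublinear p" and xs: "xs \<in> subdiff0 T g" and xs_le: "\<And>v. xs v \<le> p v"
  defines "q \<equiv> \<lambda>v. INF y\<in>{y. g y \<noteq> \<infinity>}. real_of_ereal (g y) + p (v - y)"
  shows "real_sublinear q" and "\<And>v. ereal (q v) \<le> g v" and "\<And>v. q v \<le> p v"
proof -
  define D where "D = {y. g y \<noteq> \<infinity>}"
  define \<phi> where "\<phi> y = real_of_ereal (g y)" for y
  have g_eq: "g y = ereal (\<phi> y)" if "y \<in> D" for y
    using that not_MInf[of y] by (cases "g y") (auto simp: D_def \<phi>_def)
  have xs_lin: "linear xs" using xs by (auto simp: subdiff0_def dual_def)
  have lower: "xs v \<le> \<phi> y + p (v - y)" if "y \<in> D" for v y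
  proof -
    have "ereal (xs y) \<le> g y" using xs by (simp add: subdiff0_def)
    then have "xs y \<le> \<phi> y" using g_eq[OF that] by simp
    then show ?thesis using xs_le[of "v - y"] linear_diff[OF xs_lin, of v y] by linarith
  qed
  have bdd: "bdd_below ((\<lambda>y. \<phi> y + p (v - y)) ` D)" for v
    using lower by (intro bdd_belowI[of _ "xs v"]) auto
  have q_le: "q v \<le> \<phi> y + p (v - y)" if "y \<in> D" for v y
    unfolding q_def D_def[symmetric] \<phi>_def[symmetric] by (rule cINF_lower[OF bdd that])
  have "0 \<in> D" "\<phi> 0 = 0" using zero by (auto simp: D_def \<phi>_def)
  have D_add: "y + z \<in> D" and \<phi>_add: "\<phi> (y + z) \<le> \<phi> y + \<phi> z" if "y \<in> D" "z \<in> D" for y z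
  proof -
    have "g (y + z) \<le> ereal (\<phi> y + \<phi> z)" using add_le[of y z] g_eq that by simp
    then show "y + z \<in> D" by (auto simp: D_def)
    then show "\<phi> (y + z) \<le> \<phi> y + \<phi> z" using \<open>g (y + z) \<le> _\<close> g_eq by simp
  qed
  have D_scale: "c *\<^sub>R y \<in> D" and \<phi>_scale: "\<phi> (c *\<^sub>R y) = c * \<phi> y" if "c > 0" "y \<in> D" for c y
  proof -
    have "g (c *\<^sub>R y) = ereal (c * \<phi> y)" using scale[OF that(1), of y] g_eq[OF that(2)] by simp
    then show "c *\<^sub>R y \<in> D" "\<phi> (c *\<^sub>R y) = c * \<phi> y" by (simp_all add: D_def \<phi>_def)
  qed
  show "real_sublinear q"
    unfolding q_def D_def[symmetric] \<phi>_def[symmetric]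
  proof (rule real_sublinear_inf_convolution[OF p \<open>0 \<in> D\<close>])
    show "y + z \<in> D" "\<phi> (y + z) \<le> \<phi> y + \<phi> z" if "y \<in> D" "z \<in> D" for y z
      using D_add[OF that] \<phi>_add[OF that] .
    show "c *\<^sub>R y \<in> D" "\<phi> (c *\<^sub>R y) \<le> c * \<phi> y" if "c > 0" "y \<in> D" for c y
      using D_scale[OF that] \<phi>_scale[OF that] by simp_all
  qed (rule bdd)
  show "ereal (q v) \<le> g v" for v
  proof (cases "v \<in> D")
    case True
    then show ?thesis using q_le[OF True, of v] real_sublinear_0[OF p] g_eq[OF True] by simp
  next
    case False
    then show ?thesis by (simp add: D_def)
  qed
  show "q v \<le> p v" for v using q_le[OF \<open>0 \<in> D\<close>, of v] \<open>\<phi> 0 = 0\<close> by simp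
qed

lemma exists_subgradient_above:
  assumes xs: "xs \<in> subdiff0 T g" and gx: "ereal a < g x"
  shows "\<exists>c\<in>subdiff0 T g. a < c x"
proof -
  have xs_dual: "xs \<in> dual T" and xs_le: "\<And>y. ereal (xs y) \<le> g y" using xs by (auto simp: subdiff0_def)
  have xs_lin: "linear xs" using xs_dual by (rule dual_linear)
  obtain a' where "ereal a < ereal a'" "ereal a' < g x" using ereal_dense2[OF gx] by blast
  then have a': "a < a'" "ereal a' < g x" by simp_all
  have "openin T ({u. 1 *\<^sub>R u + x \<in> {y. ereal a' < g y}} \<inter> {u. xs u \<in> {..<1}})"
    using openin_lin_top_affine_preimage[OF lin_top openin_superlevel[of "ereal a'"], of 1 x]
      openin_continuous_map_preimage[OF dual_continuous[OF xs_dual], of "{..<1}"]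
      lin_top_topspace[OF lin_top]
    by (intro openin_Int) auto
  moreover have "0 \<in> {u. 1 *\<^sub>R u + x \<in> {y. ereal a' < g y}} \<inter> {u. xs u \<in> {..<1}}"
    using a' linear_0[OF xs_lin] by simp
  ultimately obtain V where V: "openin T V" "0 \<in> V" "convex V" "\<And>v. v \<in> V \<Longrightarrow> - v \<in> V"
    and "V \<subseteq> {u. 1 *\<^sub>R u + x \<in> {y. ereal a' < g y}} \<inter> {u. xs u \<in> {..<1}}"
    by (rule hlcs_symmetric_convex_nhd[OF hlcs]) blast
  then have V_sub: "ereal a' < g (u + x)" "xs u < 1" if "u \<in> V" for u
    using that by auto
  have ab: "absorbing V" by (rule absorbing_lin_top_nhd[OF lin_top V(1,2)])
  let ?\<mu> = "minkowski_gauge V"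
  have \<mu>_nonneg: "?\<mu> u \<ge> 0" for u by (rule minkowski_gauge_nonneg[OF V(3,2) ab])
  have xs_le_\<mu>: "xs u \<le> ?\<mu> u" for u
    by (rule linear_le_minkowski_gauge[OF V(3,2) ab xs_lin V_sub(2)])
  \<comment> \<open>M is chosen so that the penalty M * gauge(x - y) beats a - xs x once y is far from x.\<close>
  define M where "M = max 2 (a - xs x + 2)"
  have M: "M \<ge> 2" "M - 1 \<ge> a - xs x + 1" by (auto simp: M_def)
  let ?p = "\<lambda>v. M * ?\<mu> v"
  have p: "real_sublinear ?p"
    using real_sublinear_cmult[OF real_sublinear_minkowski_gauge[OF V(3,2) ab]] M by simp
  have xs_le_p: "xs v \<le> ?p v" for v
    using xs_le_\<mu>[of v] \<mu>_nonneg[of v] M mult_right_mono[of 1 M "?\<mu> v"] by linarith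
  define q where "q v = (INF y\<in>{y. g y \<noteq> \<infinity>}. real_of_ereal (g y) + ?p (v - y))" for v
  note q = inf_convolution_sublinear[OF p xs xs_le_p, folded q_def]
  obtain F where F: "linear F" "\<And>v. F v \<le> q v" "F x = q x"
    using hahn_banach_sublinear[OF q(1)] by blast
  have F_le_M: "F v \<le> M" if "v \<in> V" for v
  proof -
    have "M * ?\<mu> v \<le> M * 1"
      using M by (intro mult_left_mono minkowski_gauge_le_1_if_mem[OF V(3,2) ab that]) auto
    then show ?thesis using F(2)[of v] q(3)[of v] by simp
  qed
  have F_le_g: "ereal (F v) \<le> g v" for v
  proof -
    have "ereal (F v) \<le> ereal (q v)" using F(2)[of v] by simp
    then show ?thesis using q(2)[of v] by (rule order_trans)
  qed
  have "F \<in> subdiff0 T g" by (rule mem_subdiff0_if_bounded_on_nhd[OF F(1) F_le_g V(1,2,4) F_le_M])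
  \<comment> \<open>Points y near x have g y > a'; for the others the penalty exceeds a - xs x.\<close>
  moreover have "min a' (a + 1) \<le> q x"
    unfolding q_def
  proof (rule cINF_greatest)
    have "0 \<in> {y. g y \<noteq> \<infinity>}" using zero by simp
    then show "{y. g y \<noteq> \<infinity>} \<noteq> {}" by blast
    fix y assume "y \<in> {y. g y \<noteq> \<infinity>}"
    then obtain r where r: "g y = ereal r" using not_MInf[of y] by (cases "g y") auto
    show "min a' (a + 1) \<le> real_of_ereal (g y) + M * ?\<mu> (x - y)"
    proof (cases "?\<mu> (x - y) < 1")
      case True
      then have "- (x - y) \<in> V" using V(4) minkowski_gauge_less_1_imp_mem[OF V(3,2) ab] by blast
      then have "ereal a' < g y" using V_sub(1)[of "- (x - y)"] by simp
      then have "a' < r" using r by simp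
      moreover have "0 \<le> M * ?\<mu> (x - y)" using M \<mu>_nonneg[of "x - y"] by simp
      ultimately show ?thesis using r by simp
    next
      case False
      have "xs x - xs y \<le> ?\<mu> (x - y)" using xs_le_\<mu>[of "x - y"] linear_diff[OF xs_lin] by simp
      moreover have "xs y \<le> r" using xs_le[of y] r by simp
      moreover have "M - 1 \<le> (M - 1) * ?\<mu> (x - y)"
        using mult_left_mono[of 1 "?\<mu> (x - y)" "M - 1"] False M by simp
      moreover have "(M - 1) * ?\<mu> (x - y) = M * ?\<mu> (x - y) - ?\<mu> (x - y)" by (simp add: algebra_simps)
      moreover have "min a' (a + 1) \<le> a + 1" by simp
      ultimately show ?thesis using M r by simp
    qed
  qed
  then have "a < F x" using F(3) a' by linarith
  ultimately show ?thesis by blast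
qed

end

section \<open>The quasi-interior of the subdifferential\<close>

instantiation "fun" :: (type, real_vector) real_vector
begin

definition scaleR_fun :: "real \<Rightarrow> ('a \<Rightarrow> 'b) \<Rightarrow> 'a \<Rightarrow> 'b" where
  "scaleR_fun c f = (\<lambda>x. c *\<^sub>R f x)"

instance by standard (auto simp: scaleR_fun_def fun_eq_iff scaleR_add_right scaleR_add_left)

end

lemma scaleR_fun_apply [simp]: "(c *\<^sub>R f) x = c *\<^sub>R f x"
  by (simp add: scaleR_fun_def)

lemma sum_fun_apply: "(\<Sum>i\<in>J. f i) x = (\<Sum>i\<in>J. f i x)"
  by (induction J rule: infinite_finite_induct) auto

lemma linear_functional_factors_through_finite_restriction:
  fixes F :: "('a::real_vector \<Rightarrow> real) \<Rightarrow> real"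
  assumes F: "linear F" and J: "finite J" and vanish: "\<And>v. (\<And>i. i \<in> J \<Longrightarrow> v i = 0) \<Longrightarrow> F v = 0"
  shows "\<exists>x0. \<forall>k. linear k \<longrightarrow> F k = k x0"
proof -
  define \<delta> where "\<delta> i = (\<lambda>z. if z = i then 1 else 0 :: real)" for i :: 'a
  have F_eq: "F v = (\<Sum>i\<in>J. v i * F (\<delta> i))" for v
  proof -
    have "(v - (\<Sum>i\<in>J. v i *\<^sub>R \<delta> i)) j = 0" if "j \<in> J" for j
      using J that by (simp add: \<delta>_def sum_fun_apply if_distrib[of "(*) _"] cong: if_cong)
    then have "F (v - (\<Sum>i\<in>J. v i *\<^sub>R \<delta> i)) = 0" by (rule vanish)
    then show ?thesis using F by (simp add: linear_diff linear_sum linear_scale)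
  qed
  have "F k = k (\<Sum>i\<in>J. F (\<delta> i) *\<^sub>R i)" if "linear k" for k
    unfolding F_eq[of k] using that by (simp add: linear_sum linear_scale mult.commute)
  then show ?thesis by blast
qed

definition feasible_cone :: "('a \<Rightarrow> real) set \<Rightarrow> ('a \<Rightarrow> real) \<Rightarrow> ('a \<Rightarrow> real) set" where
  "feasible_cone B b = {(\<lambda>x. t * (c x - b x)) | t c. t \<ge> 0 \<and> c \<in> B}"

lemma qi_iff_closure_feasible_cone:
  "b \<in> qi T B \<longleftrightarrow> b \<in> B \<and> weak_star T closure_of feasible_cone B b = dual T"
  by (simp add: qi_def feasible_cone_def)

lemma feasible_cone_eq: "feasible_cone B b = {t *\<^sub>R (c - b) | t c. t \<ge> 0 \<and> c \<in> B}"
  by (simp add: feasible_cone_def scaleR_fun_def fun_diff_def)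

lemma feasible_cone_subset_dual: "B \<subseteq> dual T \<Longrightarrow> b \<in> dual T \<Longrightarrow> feasible_cone B b \<subseteq> dual T"
  by (auto simp: feasible_cone_def intro!: dual_cmult dual_diff)

context
  fixes B :: "('a::real_vector \<Rightarrow> real) set" and b
  assumes convex: "convex B" and b: "b \<in> B"
begin

lemma zero_mem_feasible_cone: "0 \<in> feasible_cone B b"
  unfolding feasible_cone_eq using b by force

lemma feasible_cone_scaleR: "s > 0 \<Longrightarrow> u \<in> feasible_cone B b \<Longrightarrow> s *\<^sub>R u \<in> feasible_cone B b"
  unfolding feasible_cone_eq by (force intro: mult_nonneg_nonneg)

lemma feasible_cone_add:
  assumes "u \<in> feasible_cone B b" "v \<in> feasible_cone B b"
  shows "u + v \<in> feasible_cone B b"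
proof -
  obtain t1 c1 t2 c2 where tc: "t1 \<ge> 0" "c1 \<in> B" "u = t1 *\<^sub>R (c1 - b)" "t2 \<ge> 0" "c2 \<in> B"
    "v = t2 *\<^sub>R (c2 - b)"
    using assms unfolding feasible_cone_eq by blast
  show ?thesis
  proof (cases "t1 + t2 = 0")
    case True
    then have "t1 = 0" "t2 = 0" using tc by linarith+
    then show ?thesis using tc zero_mem_feasible_cone by simp
  next
    case False
    define s where "s = t1 + t2"
    have s: "s > 0" using False tc by (simp add: s_def)
    \<comment> \<open>u + v points from b towards a convex combination of c1 and c2.\<close>
    have "s * (t1 / s) = t1" "s * (t2 / s) = t2" using s by simp_all
    then have "s *\<^sub>R ((t1 / s) *\<^sub>R c1 + (t2 / s) *\<^sub>R c2 - b) = t1 *\<^sub>R c1 + t2 *\<^sub>R c2 - s *\<^sub>R b"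
      by (simp only: scaleR_add_right scaleR_diff_right scaleR_scaleR)
    then have "u + v = s *\<^sub>R ((t1 / s) *\<^sub>R c1 + (t2 / s) *\<^sub>R c2 - b)"
      by (simp add: tc s_def algebra_simps)
    moreover have "(t1 / s) *\<^sub>R c1 + (t2 / s) *\<^sub>R c2 \<in> B"
      using tc s by (intro convexD[OF convex]) (auto simp: s_def add_divide_distrib[symmetric])
    ultimately show ?thesis unfolding feasible_cone_eq using s by force
  qed
qed

end

lemma core_in_if_interior_of:
  assumes \<tau>: "dual_lin_top T \<tau>" and f: "f \<in> \<tau> interior_of B"
  shows "f \<in> core_in (dual T) B"
proof -
  have top: "topspace \<tau> = dual T" using \<tau> by (simp add: dual_lin_top_def)
  have f_dual: "f \<in> dual T" using interior_of_subset_topspace[of \<tau> B] f top by auto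
  have "\<exists>\<delta>>0. \<forall>t\<in>{0..\<delta>}. (\<lambda>y. f y + t * u y) \<in> B" if u: "u \<in> dual T" for u
  proof -
    have "continuous_map euclideanreal (prod_topology euclideanreal \<tau>) (\<lambda>t. (t, u))"
      using u top by (intro continuous_map_pairedI) auto
    then have "continuous_map euclideanreal \<tau> ((\<lambda>(t, h). (\<lambda>x. t * h x)) \<circ> (\<lambda>t. (t, u)))"
      using \<tau> unfolding dual_lin_top_def by (blast intro: continuous_map_compose)
    then have "continuous_map euclideanreal (prod_topology \<tau> \<tau>) (\<lambda>t. (f, \<lambda>x. t * u x))"
      using f_dual top by (intro continuous_map_pairedI) (auto simp: o_def)
    then have "continuous_map euclideanreal \<tau> ((\<lambda>(h, k). (\<lambda>x. h x + k x)) \<circ> (\<lambda>t. (f, \<lambda>x. t * u x)))"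
      using \<tau> unfolding dual_lin_top_def by (blast intro: continuous_map_compose)
    then have "continuous_map euclideanreal \<tau> (\<lambda>t. (\<lambda>y. f y + t * u y))" by (simp add: o_def)
    from openin_continuous_map_preimage[OF this openin_interior_of]
    have "open {t. (\<lambda>y. f y + t * u y) \<in> \<tau> interior_of B}" by simp
    moreover have "0 \<in> {t. (\<lambda>y. f y + t * u y) \<in> \<tau> interior_of B}" using f by simp
    ultimately obtain e where "e > 0" "ball 0 e \<subseteq> {t. (\<lambda>y. f y + t * u y) \<in> \<tau> interior_of B}"
      using open_contains_ball by blast
    then show ?thesis
      using interior_of_subset[of \<tau> B] by (intro exI[of _ "e / 2"]) (auto simp: subset_iff dist_real_def)
  qed
  then show ?thesis using f_dual by (simp add: core_in_def)
qed

lemma qi_if_core_in: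
  assumes B: "B \<subseteq> dual T" and f: "f \<in> core_in (dual T) B"
  shows "f \<in> qi T B"
proof -
  have core: "\<And>u. u \<in> dual T \<Longrightarrow> \<exists>\<delta>>0. \<forall>t\<in>{0..\<delta>}. (\<lambda>y. f y + t * u y) \<in> B"
    and f_dual: "f \<in> dual T" using f by (auto simp: core_in_def)
  obtain \<delta> where "\<delta> > 0" and \<delta>: "\<forall>t\<in>{0..\<delta>}. (\<lambda>y. f y + t * f y) \<in> B"
    using core[OF f_dual] by blast
  then have "0 \<in> {0..\<delta>}" by simp
  with \<delta> have "(\<lambda>y. f y + 0 * f y) \<in> B" by blast
  then have fB: "f \<in> B" by simp
  have "h \<in> feasible_cone B f" if h: "h \<in> dual T" for h
  proof -
    obtain \<delta> where \<delta>: "\<delta> > 0" "\<forall>t\<in>{0..\<delta>}. (\<lambda>y. f y + t * h y) \<in> B" using core[OF h] by blast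
    then have "(\<lambda>y. f y + \<delta> * h y) \<in> B" by auto
    then show ?thesis unfolding feasible_cone_def using \<delta>(1)
      by (intro CollectI exI[of _ "1 / \<delta>"] exI[of _ "\<lambda>y. f y + \<delta> * h y"]) (auto simp: fun_eq_iff)
  qed
  then have "dual T \<subseteq> weak_star T closure_of feasible_cone B f"
    using closure_of_subset[of "feasible_cone B f" "weak_star T"] feasible_cone_subset_dual[OF B f_dual]
    by (auto simp: weak_star_def)
  moreover have "weak_star T closure_of feasible_cone B f \<subseteq> dual T"
    using closure_of_subset_topspace[of "weak_star T"] by (simp add: weak_star_def)
  ultimately show ?thesis using fB by (simp add: qi_iff_closure_feasible_cone)
qed

lemma weak_star_openin_contains_box:
  assumes W: "openin (weak_star T) W" and h: "h \<in> W"
  obtains J \<epsilon> where "finite J" "\<epsilon> > 0" "\<And>k. k \<in> dual T \<Longrightarrow> (\<And>i. i \<in> J \<Longrightarrow> \<bar>k i - h i\<bar> < \<epsilon>) \<Longrightarrow> k \<in> W"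
proof -
  obtain W' where W': "openin (product_topology (\<lambda>_. euclideanreal) UNIV) W'" "W = W' \<inter> dual T"
    using W unfolding weak_star_def openin_subtopology by blast
  then obtain V where V: "finite {i. V i \<noteq> UNIV}" "\<And>i. open (V i)" "h \<in> Pi\<^sub>E UNIV V" "Pi\<^sub>E UNIV V \<subseteq> W'"
    using h unfolding openin_product_topology_alt by force
  define J where "J = {i. V i \<noteq> UNIV}"
  have hV: "h i \<in> V i" for i using V(3) by (simp add: PiE_iff)
  have "\<forall>i\<in>J. \<exists>e>0. ball (h i) e \<subseteq> V i" using V(2) hV open_contains_ball by blast
  then obtain e where e: "\<And>i. i \<in> J \<Longrightarrow> e i > 0 \<and> ball (h i) (e i) \<subseteq> V i" by metis
  define \<epsilon> where "\<epsilon> = Min (insert 1 (e ` J))"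
  have "finite J" using V(1) by (simp add: J_def)
  then have \<epsilon>: "\<epsilon> > 0" "\<And>i. i \<in> J \<Longrightarrow> \<epsilon> \<le> e i" using e by (auto simp: \<epsilon>_def)
  moreover have "k \<in> W" if "k \<in> dual T" "\<And>i. i \<in> J \<Longrightarrow> \<bar>k i - h i\<bar> < \<epsilon>" for k
  proof -
    have "k i \<in> V i" for i
    proof (cases "i \<in> J")
      case True
      then have "k i \<in> ball (h i) (e i)"
        using that(2)[OF True] \<epsilon>(2)[OF True] by (simp add: dist_real_def abs_minus_commute)
      then show ?thesis using e[OF True] by blast
    next
      case False
      then show ?thesis by (simp add: J_def)
    qed
    then show ?thesis using V(4) W'(2) that(1) by (auto simp: PiE_iff)
  qed
  ultimately show ?thesis using \<open>finite J\<close> that by blast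
qed

lemma weak_star_cone_separation:
  assumes K: "K \<subseteq> dual T" "0 \<in> K" "\<And>a b. a \<in> K \<Longrightarrow> b \<in> K \<Longrightarrow> a + b \<in> K"
      "\<And>s a. s > 0 \<Longrightarrow> a \<in> K \<Longrightarrow> s *\<^sub>R a \<in> K"
    and h: "h \<in> dual T" "h \<notin> weak_star T closure_of K"
  shows "\<exists>x0. h x0 \<ge> 1 \<and> (\<forall>k\<in>K. k x0 \<le> 0)"
proof -
  obtain W where W: "openin (weak_star T) W" "h \<in> W" "\<And>k. k \<in> K \<Longrightarrow> k \<notin> W"
    using h by (auto simp: in_closure_of weak_star_def)
  obtain J \<epsilon> where J: "finite J" and "\<epsilon> > 0"
    and box: "\<And>k. k \<in> dual T \<Longrightarrow> (\<And>i. i \<in> J \<Longrightarrow> \<bar>k i - h i\<bar> < \<epsilon>) \<Longrightarrow> k \<in> W"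
    by (rule weak_star_openin_contains_box[OF W(1,2)]) blast
  define p where "p v = (\<Sum>i\<in>J. \<bar>v i\<bar>) / \<epsilon>" for v :: "'a \<Rightarrow> real"
  have "real_sublinear p"
    unfolding real_sublinear_def p_def
  proof (intro conjI allI impI)
    show "(\<Sum>i\<in>J. \<bar>(v + w) i\<bar>) / \<epsilon> \<le> (\<Sum>i\<in>J. \<bar>v i\<bar>) / \<epsilon> + (\<Sum>i\<in>J. \<bar>w i\<bar>) / \<epsilon>" for v w
      using \<open>\<epsilon> > 0\<close> sum_mono[of J "\<lambda>i. \<bar>(v + w) i\<bar>" "\<lambda>i. \<bar>v i\<bar> + \<bar>w i\<bar>"]
      by (simp add: abs_triangle_ineq sum.distrib add_divide_distrib[symmetric] divide_right_mono)
    show "(\<Sum>i\<in>J. \<bar>(c *\<^sub>R v) i\<bar>) / \<epsilon> \<le> c * ((\<Sum>i\<in>J. \<bar>v i\<bar>) / \<epsilon>)" if "c > 0" for c v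
      using that by (simp add: abs_mult sum_distrib_left)
  qed
  moreover have "p v \<ge> 0" for v using \<open>\<epsilon> > 0\<close> by (simp add: p_def sum_nonneg)
  moreover have "p (h - k) \<ge> 1" if "k \<in> K" for k
  proof (rule ccontr)
    assume "\<not> p (h - k) \<ge> 1"
    then have "(\<Sum>i\<in>J. \<bar>h i - k i\<bar>) < \<epsilon>" using \<open>\<epsilon> > 0\<close> by (simp add: p_def)
    then have "\<bar>k i - h i\<bar> < \<epsilon>" if "i \<in> J" for i
      using member_le_sum[OF that _ J, of "\<lambda>i. \<bar>h i - k i\<bar>"] by (simp add: abs_minus_commute)
    then show False using box W(3) K(1) \<open>k \<in> K\<close> by blast
  qed
  ultimately obtain F where F: "linear F" "\<And>v. F v \<le> p v" "\<And>k. k \<in> K \<Longrightarrow> F k \<le> 0" "F h \<ge> 1"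
    using convex_cone_separation[of p K h] K(2-4) by blast
  \<comment> \<open>F is weak* continuous, so it only sees the coordinates in J: it is evaluation at a point of X.\<close>
  have "F v = 0" if "\<And>i. i \<in> J \<Longrightarrow> v i = 0" for v
    using F(2)[of v] F(2)[of "- v"] linear_neg[OF F(1), of v] that by (simp add: p_def)
  then obtain x0 where "\<And>k. linear k \<Longrightarrow> F k = k x0"
    using linear_functional_factors_through_finite_restriction[OF F(1) J] by blast
  then show ?thesis using F(3,4) h(1) K(1) dual_linear by (metis subsetD)
qed

lemma subdiff0_subset_dual: "subdiff0 T g \<subseteq> dual T"
  by (auto simp: subdiff0_def)

lemma convex_subdiff0: "convex (subdiff0 T g)"
proof (rule convexI)
  fix c1 c2 and a b :: real
  assume c: "c1 \<in> subdiff0 T g" "c2 \<in> subdiff0 T g" and ab: "0 \<le> a" "0 \<le> b" "a + b = 1"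
  have "a *\<^sub>R c1 + b *\<^sub>R c2 = (\<lambda>x. a * c1 x + b * c2 x)" by (simp add: fun_eq_iff)
  moreover have "(\<lambda>x. a * c1 x + b * c2 x) \<in> dual T"
    using c by (intro dual_add dual_cmult) (auto simp: subdiff0_def)
  moreover have "ereal (a * c1 x + b * c2 x) \<le> g x" for x
  proof (cases "g x")
    case (real r)
    have "c1 x \<le> r" "c2 x \<le> r" using c real by (auto simp: subdiff0_def dest!: spec[of _ x])
    then have "a * c1 x + b * c2 x \<le> a * r + b * r" using ab by (intro add_mono mult_left_mono)
    also have "\<dots> = r" using ab(3) by (simp add: distrib_right[symmetric])
    finally show ?thesis using real by simp
  next
    case MInf
    then show ?thesis using c by (auto simp: subdiff0_def dest!: spec[of _ x])
  qed simp
  ultimately show "a *\<^sub>R c1 + b *\<^sub>R c2 \<in> subdiff0 T g" by (simp add: subdiff0_def)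
qed

context lsc_sublinear
begin

lemma zero_mem_below:
  assumes "xs \<in> dual T"
  shows "0 \<in> below g xs"
  using zero linear_0[OF dual_linear[OF assms]] by (simp add: below_def)

lemma mem_subdiff0_if_below_eq_zero:
  assumes "xs \<in> dual T" "below g xs = {0}"
  shows "xs \<in> subdiff0 T g"
proof -
  have "ereal (xs y) \<le> g y" for y
  proof (cases "y = 0")
    case True
    then show ?thesis using zero linear_0[OF dual_linear[OF assms(1)]] by simp
  next
    case False
    then have "y \<notin> below g xs" using assms(2) by blast
    then show ?thesis by (simp add: below_def)
  qed
  then show ?thesis using assms(1) by (simp add: subdiff0_def)
qed

lemma mem_below_if_subgradients_le:
  assumes "xs \<in> subdiff0 T g" "\<And>c. c \<in> subdiff0 T g \<Longrightarrow> c x \<le> xs x"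
  shows "x \<in> below g xs"
proof (rule ccontr)
  assume "x \<notin> below g xs"
  then have "ereal (xs x) < g x" by (simp add: below_def)
  then obtain c where "c \<in> subdiff0 T g" "xs x < c x"
    using exists_subgradient_above[OF assms(1)] by blast
  then show False using assms(2) by (meson not_le)
qed

lemma below_eq_zero_if_qi:
  assumes "xs \<in> qi T (subdiff0 T g)"
  shows "below g xs = {0}"
proof -
  have xs: "xs \<in> subdiff0 T g"
    and closure: "weak_star T closure_of feasible_cone (subdiff0 T g) xs = dual T"
    using assms by (simp_all add: qi_iff_closure_feasible_cone)
  have "y = 0" if y: "y \<in> below g xs" for y
  proof (rule ccontr)
    assume "y \<noteq> 0"
    then obtain F where F: "F \<in> dual T" "F y \<ge> 1" using hlcs_separating_functional[OF hlcs] by blast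
    \<comment> \<open>F lies in the weak* open set where evaluation at y is positive, which misses the feasible cone.\<close>
    have open_pos: "openin (weak_star T) ({h. h y \<in> {0<..}} \<inter> dual T)"
      unfolding weak_star_def openin_subtopology
      using openin_continuous_map_preimage[OF continuous_map_product_projection[of y UNIV "\<lambda>_.
        euclideanreal"],
          of "{0<..}"]
      by auto
    have "F \<in> {h. h y \<in> {0<..}} \<inter> dual T" using F by simp
    moreover have "F \<in> weak_star T closure_of feasible_cone (subdiff0 T g) xs" using closure F(1) by simp
    ultimately have "\<exists>k. k \<in> feasible_cone (subdiff0 T g) xs \<and> k \<in> {h. h y \<in> {0<..}} \<inter> dual T"
      using open_pos by (simp only: in_closure_of)
    then obtain k where k: "k \<in> feasible_cone (subdiff0 T g) xs" "k y > 0" by auto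
    then obtain t c where "k = (\<lambda>x. t * (c x - xs x))" "t \<ge> 0" "c \<in> subdiff0 T g"
      unfolding feasible_cone_def by blast
    then have "t \<ge> 0" "c \<in> subdiff0 T g" "t * (c y - xs y) > 0" using k(2) by simp_all
    moreover have "c y \<le> xs y"
    proof -
      have "ereal (c y) \<le> g y" using \<open>c \<in> subdiff0 T g\<close> by (simp add: subdiff0_def)
      also have "g y \<le> ereal (xs y)" using y by (simp add: below_def)
      finally show ?thesis by simp
    qed
    ultimately show False using mult_nonneg_nonpos[of t "c y - xs y"] by simp
  qed
  then show ?thesis using zero_mem_below xs subdiff0_subset_dual by blast
qed

lemma qi_if_below_eq_zero:
  assumes xs: "xs \<in> dual T" and below: "below g xs = {0}"
  shows "xs \<in> qi T (subdiff0 T g)"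
proof -
  let ?B = "subdiff0 T g"
  have xsB: "xs \<in> ?B" by (rule mem_subdiff0_if_below_eq_zero[OF xs below])
  have "h \<in> weak_star T closure_of feasible_cone ?B xs" if h: "h \<in> dual T" for h
  proof (rule ccontr)
    assume "h \<notin> weak_star T closure_of feasible_cone ?B xs"
    note cone = feasible_cone_subset_dual[OF subdiff0_subset_dual xs]
      zero_mem_feasible_cone[OF convex_subdiff0 xsB]
      feasible_cone_add[OF convex_subdiff0 xsB] feasible_cone_scaleR[OF convex_subdiff0 xsB]
    obtain x0 where x0: "h x0 \<ge> 1" "\<And>k. k \<in> feasible_cone ?B xs \<Longrightarrow> k x0 \<le> 0"
      using weak_star_cone_separation[OF cone h \<open>h \<notin> _\<close>] by blast
    have "c x0 \<le> xs x0" if "c \<in> ?B" for c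
    proof -
      have "(\<lambda>x. 1 * (c x - xs x)) \<in> feasible_cone ?B xs"
        unfolding feasible_cone_def using that by (intro CollectI exI[of _ 1] exI[of _ c]) simp
      from x0(2)[OF this] show ?thesis by simp
    qed
    then have "x0 \<in> below g xs" by (rule mem_below_if_subgradients_le[OF xsB])
    then have "x0 = 0" using below by simp
    then show False using x0(1) linear_0[OF dual_linear[OF h]] by simp
  qed
  moreover have "weak_star T closure_of feasible_cone ?B xs \<subseteq> dual T"
    using closure_of_subset_topspace[of "weak_star T"] by (simp add: weak_star_def)
  ultimately show ?thesis using xsB by (auto simp: qi_iff_closure_feasible_cone)
qed

end

section \<open>Normed spaces and the dual norm\<close>

lemma continuous_map_prod_mtopology:
  assumes M1: "Metric_space M1 d1" and M2: "Metric_space M2 d2" and M: "Metric_space M d"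
    and maps: "\<And>x y. x \<in> M1 \<Longrightarrow> y \<in> M2 \<Longrightarrow> f (x, y) \<in> M"
    and cont: "\<And>x y \<epsilon>. x \<in> M1 \<Longrightarrow> y \<in> M2 \<Longrightarrow> \<epsilon> > 0 \<Longrightarrow>
      \<exists>\<delta>>0. \<forall>x'\<in>M1. \<forall>y'\<in>M2. d1 x x' < \<delta> \<longrightarrow> d2 y y' < \<delta> \<longrightarrow> d (f (x, y)) (f (x', y')) < \<epsilon>"
  shows "continuous_map (prod_topology (Metric_space.mtopology M1 d1) (Metric_space.mtopology M2 d2))
    (Metric_space.mtopology M d) f"
proof -
  interpret Metric_space12 M1 d1 M2 d2 by (simp add: Metric_space12_def M1 M2)
  have "Prod_metric.mtopology = prod_topology M1.mtopology M2.mtopology"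
    by (rule mtopology_prod_metric)
  moreover have "continuous_map Prod_metric.mtopology (Metric_space.mtopology M d) f"
    unfolding Prod_metric.metric_continuous_map[OF M]
  proof (intro conjI ballI allI impI)
    show "f ` (M1 \<times> M2) \<subseteq> M" using maps by auto
    fix a and \<epsilon> :: real assume "a \<in> M1 \<times> M2" "\<epsilon> > 0"
    then obtain x y \<delta> where a: "a = (x, y)" "x \<in> M1" "y \<in> M2" and "\<delta> > 0"
      and \<delta>: "\<forall>x'\<in>M1. \<forall>y'\<in>M2. d1 x x' < \<delta> \<longrightarrow> d2 y y' < \<delta> \<longrightarrow> d (f (x, y)) (f (x', y')) < \<epsilon>"
      using cont by blast
    show "\<exists>\<delta>>0. \<forall>b. b \<in> M1 \<times> M2 \<and> prod_dist d1 d2 a b < \<delta> \<longrightarrow> d (f a) (f b) < \<epsilon>"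
    proof (intro exI[of _ \<delta>] conjI allI impI)
      fix b assume b: "b \<in> M1 \<times> M2 \<and> prod_dist d1 d2 a b < \<delta>"
      then obtain x' y' where b': "b = (x', y')" "x' \<in> M1" "y' \<in> M2" by auto
      have "d1 x x' < \<delta>" "d2 y y' < \<delta>"
        using b component_le_prod_metric(1)[of x x' y y'] component_le_prod_metric(2)[of y y' x x']
        unfolding a b' by linarith+
      then show "d (f a) (f b) < \<epsilon>" using \<delta> a b' by blast
    qed fact
  qed
  ultimately show ?thesis by simp
qed

locale vector_norm =
  fixes N :: "'a::real_vector \<Rightarrow> real"
  assumes is_norm: "is_norm N"
begin

lemma add_le: "N (x + y) \<le> N x + N y"
  using is_norm by (simp add: is_norm_def)

lemma scale: "N (c *\<^sub>R x) = \<bar>c\<bar> * N x"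
  using is_norm by (simp add: is_norm_def)

lemma eq_0_imp: "N x = 0 \<Longrightarrow> x = 0"
  using is_norm by (simp add: is_norm_def)

lemma zero [simp]: "N 0 = 0"
  using scale[of 0 0] by simp

lemma minus: "N (- x) = N x"
  using scale[of "- 1" x] by simp

lemma nonneg [simp]: "0 \<le> N x"
  using add_le[of x "- x"] minus[of x] by simp

lemma diff_commute: "N (x - y) = N (y - x)"
  using minus[of "x - y"] by simp

sublocale norm_metric: Metric_space UNIV "\<lambda>x y. N (x - y)"
proof
  show "N (x - y) = N (y - x)" for x y by (rule diff_commute)
  show "N (x - y) = 0 \<longleftrightarrow> x = y" for x y using eq_0_imp[of "x - y"] by auto
  show "N (x - z) \<le> N (x - y) + N (y - z)" for x y z using add_le[of "x - y" "y - z"] by simp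
qed simp

lemma norm_top_eq_mtopology: "norm_top N = norm_metric.mtopology"
proof -
  have "(\<lambda>U. \<forall>x\<in>U. \<exists>e>0. \<forall>y. N (y - x) < e \<longrightarrow> y \<in> U) = openin norm_metric.mtopology"
    by (auto simp: fun_eq_iff norm_metric.openin_mtopology subset_iff diff_commute)
  then show ?thesis by (simp add: norm_top_def openin_inverse)
qed

lemma openin_norm_top: "openin (norm_top N) U \<longleftrightarrow> (\<forall>x\<in>U. \<exists>e>0. \<forall>y. N (y - x) < e \<longrightarrow> y \<in> U)"
  by (auto simp: norm_top_eq_mtopology norm_metric.openin_mtopology subset_iff diff_commute)

lemma topspace_norm_top [simp]: "topspace (norm_top N) = UNIV"
  by (simp add: norm_top_eq_mtopology)

lemma openin_norm_ball: "openin (norm_top N) {y. N (y - x) < r}"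
proof -
  have "{y. N (y - x) < r} = norm_metric.mball x r" by (auto simp: diff_commute)
  then show ?thesis by (simp add: norm_top_eq_mtopology)
qed

lemma dual_bounded:
  assumes "f \<in> dual (norm_top N)"
  obtains C where "\<And>x. \<bar>f x\<bar> \<le> C * N x"
proof -
  have f: "linear f" "continuous_map (norm_top N) euclideanreal f" using assms by (auto simp: dual_def)
  have "openin (norm_top N) {y. f y \<in> {-1<..<1}}"
    using openin_continuous_map_preimage[OF f(2), of "{-1<..<1}"] by simp
  moreover have "0 \<in> {y. f y \<in> {-1<..<1}}" using linear_0[OF f(1)] by simp
  ultimately obtain e where "e > 0" "norm_metric.mball 0 e \<subseteq> {y. f y \<in> {-1<..<1}}"
    unfolding norm_top_eq_mtopology norm_metric.openin_mtopology by blast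
  then have e: "e > 0" "\<And>y. N y < e \<Longrightarrow> \<bar>f y\<bar> < 1" by (auto simp: subset_iff minus)
  have "\<bar>f x\<bar> \<le> (2 / e) * N x" for x
  proof (cases "N x = 0")
    case True
    then have "x = 0" by (rule eq_0_imp)
    then show ?thesis using linear_0[OF f(1)] by simp
  next
    case False
    then have Nx: "N x > 0" using nonneg[of x] by linarith
    have "N ((e / (2 * N x)) *\<^sub>R x) < e" using Nx e(1) by (simp add: scale)
    then have "\<bar>(e / (2 * N x)) * f x\<bar> < 1" using e(2) linear_scale[OF f(1)] by fastforce
    then show ?thesis using Nx e(1) by (simp add: abs_mult field_simps)
  qed
  then show ?thesis by (rule that)
qed

lemma bdd_above_dual_norm_set:
  assumes "f \<in> dual (norm_top N)"
  shows "bdd_above {\<bar>f x\<bar> | x. N x \<le> 1}"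
proof -
  obtain C where C: "\<And>x. \<bar>f x\<bar> \<le> C * N x" using dual_bounded[OF assms] by blast
  have "\<bar>f x\<bar> \<le> \<bar>C\<bar>" if "N x \<le> 1" for x
    using C[of x] mult_mono[OF abs_ge_self[of C] that] by (smt (verit) nonneg)
  then show ?thesis by (intro bdd_aboveI[of _ "\<bar>C\<bar>"]) blast
qed

lemma dual_norm_le:
  assumes "C \<ge> 0" "\<And>x. \<bar>f x\<bar> \<le> C * N x"
  shows "dual_norm N f \<le> C"
  unfolding dual_norm_def
proof (rule cSup_least)
  show "{\<bar>f x\<bar> | x. N x \<le> 1} \<noteq> {}" by (auto intro: exI[of _ 0])
  show "a \<le> C" if "a \<in> {\<bar>f x\<bar> | x. N x \<le> 1}" for a
    using that assms mult_left_mono[of _ 1 C] by (fastforce intro: order_trans)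
qed

lemma dual_norm_nonneg:
  assumes "f \<in> dual (norm_top N)"
  shows "0 \<le> dual_norm N f"
proof -
  have "\<bar>f 0\<bar> \<in> {\<bar>f x\<bar> | x. N x \<le> 1}" by (auto intro: exI[of _ 0])
  then show ?thesis unfolding dual_norm_def
    by (rule cSup_upper2[OF _ _ bdd_above_dual_norm_set[OF assms]]) simp
qed

lemma abs_le_dual_norm:
  assumes f: "f \<in> dual (norm_top N)"
  shows "\<bar>f x\<bar> \<le> dual_norm N f * N x"
proof (cases "N x = 0")
  case True
  then have "x = 0" by (rule eq_0_imp)
  then show ?thesis using linear_0[OF dual_linear[OF f]] by simp
next
  case False
  then have Nx: "N x > 0" using nonneg[of x] by linarith
  have "N (inverse (N x) *\<^sub>R x) = 1" using Nx by (simp add: scale)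
  then have "\<bar>f (inverse (N x) *\<^sub>R x)\<bar> \<le> dual_norm N f"
    unfolding dual_norm_def by (intro cSup_upper[OF _ bdd_above_dual_norm_set[OF f]]) auto
  then show ?thesis using Nx linear_scale[OF dual_linear[OF f]] by (simp add: abs_mult field_simps)
qed

lemma mem_dual_if_bounded:
  assumes F: "linear F" and bound: "\<And>x. \<bar>F x\<bar> \<le> C * N x"
  shows "F \<in> dual (norm_top N)"
proof -
  have "continuous_map (norm_top N) euclideanreal F"
    unfolding continuous_map_real_iff_ball
  proof (intro ballI allI impI)
    fix x and e :: real assume "e > 0"
    define r where "r = e / (\<bar>C\<bar> + 1)"
    have "r > 0" using \<open>e > 0\<close> by (simp add: r_def)
    have "\<bar>F y - F x\<bar> < e" if "N (y - x) < r" for y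
    proof -
      have "\<bar>F y - F x\<bar> \<le> \<bar>C\<bar> * N (y - x)"
        using bound[of "y - x"] linear_diff[OF F] abs_ge_self[of C] nonneg[of "y - x"]
        by (metis mult_right_mono order_trans)
      also have "\<dots> \<le> \<bar>C\<bar> * r" using that by (simp add: mult_left_mono)
      also have "\<dots> < e" using \<open>e > 0\<close> by (simp add: r_def field_simps)
      finally show ?thesis .
    qed
    then show "\<exists>U. openin (norm_top N) U \<and> x \<in> U \<and> (\<forall>y\<in>U. \<bar>F y - F x\<bar> < e)"
      using openin_norm_ball[of x r] \<open>r > 0\<close> by auto
  qed
  then show ?thesis using F by (simp add: dual_def)
qed

lemma norm_supporting_functional:
  "\<exists>F\<in>dual (norm_top N). (\<forall>v. \<bar>F v\<bar> \<le> N v) \<and> F x = N x"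
proof -
  have "real_sublinear N" unfolding real_sublinear_def using add_le scale by simp
  then obtain F where F: "linear F" "\<And>v. F v \<le> N v" "F x = N x"
    using hahn_banach_sublinear by blast
  have "\<bar>F v\<bar> \<le> N v" for v
    using F(2)[of v] F(2)[of "- v"] linear_neg[OF F(1), of v] minus[of v] by linarith
  then show ?thesis using F mem_dual_if_bounded[OF F(1), of 1] by auto
qed

end

text \<open>The dual norm is junk for unbounded functions, but the library's metric spaces need a
  nonnegative distance everywhere, hence the case distinction.\<close>
definition dual_norm_dist :: "('a::real_vector \<Rightarrow> real) \<Rightarrow> ('a \<Rightarrow> real) \<Rightarrow> ('a \<Rightarrow> real) \<Rightarrow> real" where
  "dual_norm_dist N f h =
    (if f \<in> dual (norm_top N) \<and> h \<in> dual (norm_top N) then dual_norm N (\<lambda>x. h x - f x) else 0)"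

definition dual_norm_topology :: "('a::real_vector \<Rightarrow> real) \<Rightarrow> ('a \<Rightarrow> real) topology" where
  "dual_norm_topology N = Metric_space.mtopology (dual (norm_top N)) (dual_norm_dist N)"

context vector_norm
begin

lemma abs_diff_le_dual_norm_dist:
  assumes "f \<in> dual (norm_top N)" "h \<in> dual (norm_top N)"
  shows "\<bar>h x - f x\<bar> \<le> dual_norm_dist N f h * N x"
  using abs_le_dual_norm[OF dual_diff[OF assms(2,1)]] assms by (simp add: dual_norm_dist_def)

lemma dual_norm_dist_le:
  assumes "f \<in> dual (norm_top N)" "h \<in> dual (norm_top N)" "C \<ge> 0" "\<And>x. \<bar>h x - f x\<bar> \<le> C * N x"
  shows "dual_norm_dist N f h \<le> C"
  using dual_norm_le[OF assms(3,4)] assms(1,2) by (simp add: dual_norm_dist_def)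

lemma Metric_space_dual_norm_dist: "Metric_space (dual (norm_top N)) (dual_norm_dist N)"
proof
  show "0 \<le> dual_norm_dist N f h" for f h
    using dual_norm_nonneg[OF dual_diff] by (simp add: dual_norm_dist_def)
  show "dual_norm_dist N f h = dual_norm_dist N h f" for f h
    by (simp add: dual_norm_dist_def dual_norm_def abs_minus_commute conj_commute)
  show "dual_norm_dist N f h = 0 \<longleftrightarrow> f = h" if "f \<in> dual (norm_top N)" "h \<in> dual (norm_top N)" for f h
  proof
    assume "dual_norm_dist N f h = 0"
    then show "f = h" using abs_diff_le_dual_norm_dist[OF that] by (simp add: fun_eq_iff)
  next
    assume "f = h"
    then show "dual_norm_dist N f h = 0"
      using dual_norm_dist_le[OF that, of 0] dual_norm_nonneg[OF dual_diff[OF that(2,1)]] that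
      by (simp add: dual_norm_dist_def)
  qed
  show "dual_norm_dist N f k \<le> dual_norm_dist N f h + dual_norm_dist N h k"
    if "f \<in> dual (norm_top N)" "h \<in> dual (norm_top N)" "k \<in> dual (norm_top N)" for f h k
  proof (rule dual_norm_dist_le[OF that(1,3)])
    show "0 \<le> dual_norm_dist N f h + dual_norm_dist N h k"
      using dual_norm_nonneg[OF dual_diff] that by (simp add: dual_norm_dist_def)
    show "\<bar>k x - f x\<bar> \<le> (dual_norm_dist N f h + dual_norm_dist N h k) * N x" for x
      using abs_diff_le_dual_norm_dist[OF that(1,2), of x] abs_diff_le_dual_norm_dist[OF that(2,3), of x]
      by (simp add: distrib_right)
  qed
qed

lemma dual_norm_dist_add_le:
  assumes "f \<in> dual (norm_top N)" "h \<in> dual (norm_top N)" "f' \<in> dual (norm_top N)"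
    "h' \<in> dual (norm_top N)"
  shows "dual_norm_dist N (\<lambda>x. f x + h x) (\<lambda>x. f' x + h' x)
    \<le> dual_norm_dist N f f' + dual_norm_dist N h h'"
proof (rule dual_norm_dist_le[OF dual_add[OF assms(1,2)] dual_add[OF assms(3,4)]])
  show "0 \<le> dual_norm_dist N f f' + dual_norm_dist N h h'"
    using Metric_space.nonneg[OF Metric_space_dual_norm_dist] by (simp add: add_nonneg_nonneg)
  show "\<bar>(f' x + h' x) - (f x + h x)\<bar> \<le> (dual_norm_dist N f f' + dual_norm_dist N h h') * N x" for x
    using abs_diff_le_dual_norm_dist[OF assms(1,3), of x] abs_diff_le_dual_norm_dist[OF assms(2,4), of x]
    by (simp add: distrib_right)
qed

lemma dual_norm_dist_cmult_le:
  assumes f0: "f0 \<in> dual (norm_top N)" and f: "f \<in> dual (norm_top N)"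
    and t: "\<bar>t0 - t\<bar> \<le> \<delta>" and close: "dual_norm_dist N f0 f \<le> \<delta>" and "\<delta> \<le> 1"
  shows "dual_norm_dist N (\<lambda>x. t0 * f0 x) (\<lambda>x. t * f x) \<le> \<delta> * (\<bar>t0\<bar> + 1 + dual_norm N f0)"
proof (rule dual_norm_dist_le[OF dual_cmult[OF f0] dual_cmult[OF f]])
  have "0 \<le> \<delta>" using t by linarith
  then show "0 \<le> \<delta> * (\<bar>t0\<bar> + 1 + dual_norm N f0)" using dual_norm_nonneg[OF f0] by simp
  fix x
  have "t * f x - t0 * f0 x = t * (f x - f0 x) + (t - t0) * f0 x" by (simp add: algebra_simps)
  then have "\<bar>t * f x - t0 * f0 x\<bar> \<le> \<bar>t\<bar> * \<bar>f x - f0 x\<bar> + \<bar>t - t0\<bar> * \<bar>f0 x\<bar>"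
    using abs_triangle_ineq[of "t * (f x - f0 x)" "(t - t0) * f0 x"] by (simp add: abs_mult)
  also have "\<dots> \<le> (\<bar>t0\<bar> + 1) * (\<delta> * N x) + \<delta> * (dual_norm N f0 * N x)"
  proof (intro add_mono mult_mono)
    show "\<bar>t\<bar> \<le> \<bar>t0\<bar> + 1" "\<bar>t - t0\<bar> \<le> \<delta>" using t \<open>\<delta> \<le> 1\<close> by linarith+
    show "\<bar>f x - f0 x\<bar> \<le> \<delta> * N x"
      using abs_diff_le_dual_norm_dist[OF f0 f, of x] mult_right_mono[OF close, of "N x"] by simp
    show "\<bar>f0 x\<bar> \<le> dual_norm N f0 * N x" by (rule abs_le_dual_norm[OF f0])
  qed (use \<open>0 \<le> \<delta>\<close> in auto)
  also have "\<dots> = \<delta> * (\<bar>t0\<bar> + 1 + dual_norm N f0) * N x" by (simp add: algebra_simps)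
  finally show "\<bar>t * f x - t0 * f0 x\<bar> \<le> \<delta> * (\<bar>t0\<bar> + 1 + dual_norm N f0) * N x" .
qed

lemma continuous_map_dual_norm_topology_add:
  "continuous_map (prod_topology (dual_norm_topology N) (dual_norm_topology N)) (dual_norm_topology N)
    (\<lambda>(f, h). (\<lambda>x. f x + h x))"
  unfolding dual_norm_topology_def
proof (rule continuous_map_prod_mtopology[OF Metric_space_dual_norm_dist Metric_space_dual_norm_dist
      Metric_space_dual_norm_dist])
  let ?D = "dual (norm_top N)" and ?d = "dual_norm_dist N"
  show "(\<lambda>(f, h). (\<lambda>x. f x + h x)) (f, h) \<in> ?D" if "f \<in> ?D" "h \<in> ?D" for f h
    using dual_add[OF that] by simp
  fix f h and \<epsilon> :: real assume fh: "f \<in> ?D" "h \<in> ?D" and "\<epsilon> > 0"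
  show "\<exists>\<delta>>0. \<forall>f'\<in>?D. \<forall>h'\<in>?D. ?d f f' < \<delta> \<longrightarrow> ?d h h' < \<delta> \<longrightarrow>
      ?d ((\<lambda>(f, h). (\<lambda>x. f x + h x)) (f, h)) ((\<lambda>(f, h). (\<lambda>x. f x + h x)) (f', h')) < \<epsilon>"
    using \<open>\<epsilon> > 0\<close> dual_norm_dist_add_le[OF fh] by (intro exI[of _ "\<epsilon> / 2"]) fastforce
qed

lemma continuous_map_dual_norm_topology_cmult:
  "continuous_map (prod_topology euclideanreal (dual_norm_topology N)) (dual_norm_topology N)
    (\<lambda>(t, f). (\<lambda>x. t * f x))"
  unfolding dual_norm_topology_def mtopology_is_euclidean[symmetric]
proof (rule continuous_map_prod_mtopology[OF Met_TC.Metric_space_axioms Metric_space_dual_norm_dist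
      Metric_space_dual_norm_dist])
  let ?D = "dual (norm_top N)" and ?d = "dual_norm_dist N"
  show "(\<lambda>(t, f). (\<lambda>x. t * f x)) (t, f) \<in> ?D" if "f \<in> ?D" for t f
    using dual_cmult[OF that] by simp
  fix t0 :: real and f0 and \<epsilon> :: real assume f0: "f0 \<in> ?D" and "\<epsilon> > 0"
  define L where "L = \<bar>t0\<bar> + 1 + dual_norm N f0"
  have L: "L > 0" using dual_norm_nonneg[OF f0] by (simp add: L_def)
  define \<delta> where "\<delta> = min 1 (\<epsilon> / (2 * L))"
  have \<delta>: "\<delta> > 0" "\<delta> \<le> 1" "\<delta> * L < \<epsilon>"
    using \<open>\<epsilon> > 0\<close> L by (auto simp: \<delta>_def min_def field_simps)
  show "\<exists>\<delta>>0. \<forall>t\<in>UNIV. \<forall>f\<in>?D. dist t0 t < \<delta> \<longrightarrow> ?d f0 f < \<delta> \<longrightarrow>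
      ?d ((\<lambda>(t, f). (\<lambda>x. t * f x)) (t0, f0)) ((\<lambda>(t, f). (\<lambda>x. t * f x)) (t, f)) < \<epsilon>"
  proof (intro exI[of _ \<delta>] conjI ballI impI)
    fix t f assume "f \<in> ?D" "dist t0 t < \<delta>" "?d f0 f < \<delta>"
    then have "?d (\<lambda>x. t0 * f0 x) (\<lambda>x. t * f x) \<le> \<delta> * L"
      unfolding L_def using \<delta>(2) by (intro dual_norm_dist_cmult_le[OF f0]) (auto simp: dist_real_def)
    then show "?d ((\<lambda>(t, f). (\<lambda>x. t * f x)) (t0, f0)) ((\<lambda>(t, f). (\<lambda>x. t * f x)) (t, f)) < \<epsilon>"
      using \<delta>(3) by simp
  qed (rule \<delta>(1))
qed

lemma dual_lin_top_dual_norm_topology: "dual_lin_top (norm_top N) (dual_norm_topology N)"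
proof -
  interpret D: Metric_space "dual (norm_top N)" "dual_norm_dist N" by (rule Metric_space_dual_norm_dist)
  show ?thesis
    using continuous_map_dual_norm_topology_add continuous_map_dual_norm_topology_cmult
    by (simp add: dual_lin_top_def dual_norm_topology_def)
qed

lemma mem_interior_if_dual_norm_ball_subset:
  assumes f: "f \<in> dual (norm_top N)" and "r > 0"
    and ball: "\<And>h. h \<in> dual (norm_top N) \<Longrightarrow> dual_norm N (\<lambda>x. h x - f x) < r \<Longrightarrow> h \<in> B"
  shows "f \<in> dual_norm_topology N interior_of B"
proof -
  interpret D: Metric_space "dual (norm_top N)" "dual_norm_dist N" by (rule Metric_space_dual_norm_dist)
  have "D.mball f r \<subseteq> B" using ball f by (auto simp: dual_norm_dist_def)
  then have "D.mball f r \<subseteq> D.mtopology interior_of B" by (simp add: interior_of_maximal)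
  then show ?thesis using f \<open>r > 0\<close> by (auto simp: dual_norm_topology_def)
qed

lemma dual_norm_ball_subset_subdiff0_if_coercive:
  assumes xs: "xs \<in> dual (norm_top N)" and coercive: "\<And>x. ereal (\<alpha> * N x) \<le> g x - ereal (xs x)"
    and h: "h \<in> dual (norm_top N)" "dual_norm N (\<lambda>x. h x - xs x) < \<alpha>"
  shows "h \<in> subdiff0 (norm_top N) g"
proof -
  have "ereal (h x) \<le> g x" for x
  proof (cases "g x")
    case (real s)
    have "h x - xs x \<le> dual_norm N (\<lambda>x. h x - xs x) * N x"
      using abs_le_dual_norm[OF dual_diff[OF h(1) xs], of x] by linarith
    also have "\<dots> \<le> \<alpha> * N x" using h(2) by (intro mult_right_mono) auto
    also have "\<dots> \<le> s - xs x" using coercive[of x] real by simp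
    finally show ?thesis using real by simp
  next
    case MInf
    then show ?thesis using coercive[of x] by simp
  qed simp
  then show ?thesis using h(1) by (simp add: subdiff0_def)
qed

lemma coercive_if_dual_norm_ball_subset_subdiff0:
  assumes xs: "xs \<in> dual (norm_top N)" and "r > 0"
    and ball: "\<And>h. h \<in> dual (norm_top N) \<Longrightarrow> dual_norm N (\<lambda>x. h x - xs x) < r \<Longrightarrow> h \<in> subdiff0 (norm_top
      N) g"
  shows "ereal (r / 2 * N x) \<le> g x - ereal (xs x)"
proof -
  \<comment> \<open>Perturb xs by half the radius times a norming functional at x.\<close>
  obtain F where F: "F \<in> dual (norm_top N)" "\<And>v. \<bar>F v\<bar> \<le> N v" "F x = N x"
    using norm_supporting_functional by blast
  define h where "h y = xs y + r / 2 * F y" for y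
  have h_dual: "h \<in> dual (norm_top N)" unfolding h_def[abs_def]
    by (intro dual_add[OF xs] dual_cmult[OF F(1)])
  have "dual_norm N (\<lambda>y. h y - xs y) \<le> r / 2"
    using F(2) \<open>r > 0\<close> by (intro dual_norm_le) (auto simp: h_def abs_mult)
  then have "h \<in> subdiff0 (norm_top N) g" using ball[OF h_dual] \<open>r > 0\<close> by simp
  then have "ereal (h x) \<le> g x" by (simp add: subdiff0_def)
  moreover have "h x = xs x + r / 2 * N x" by (simp add: h_def F(3))
  ultimately have "ereal (xs x + r / 2 * N x) \<le> g x" by simp
  then show ?thesis by (cases "g x") auto
qed

end

section \<open>Finite dimension\<close>

lemma compactin_lsc_gap:
  fixes g :: "'a \<Rightarrow> ereal"
  assumes S: "compactin T S" and g: "\<And>c. openin T {x. c < g x}" and f: "continuous_map T euclideanreal f"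
    and less: "\<And>v. v \<in> S \<Longrightarrow> ereal (f v) < g v"
  shows "\<exists>\<delta>>0. \<forall>v\<in>S. ereal (f v + \<delta>) \<le> g v"
proof -
  have "\<exists>p q. f v < p \<and> p < q \<and> ereal q < g v" if v: "v \<in> S" for v
  proof -
    obtain q where "ereal (f v) < ereal q" "ereal q < g v" using ereal_dense2[OF less[OF v]] by blast
    then show ?thesis by (intro exI[of _ "(f v + q) / 2"] exI[of _ q]) auto
  qed
  then obtain p q where pq: "\<And>v. v \<in> S \<Longrightarrow> f v < p v \<and> p v < q v \<and> ereal (q v) < g v" by metis
  \<comment> \<open>Around each v, f stays below p v and g above q v; finitely many of these neighbourhoods cover S.\<close>
  define U where "U v = {y. ereal (q v) < g y} \<inter> {y \<in> topspace T. f y \<in> {..<p v}}" for v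
  have "openin T (U v)" for v
    unfolding U_def
      using g openin_continuous_map_preimage[OF f, of "{..<p v}"] by (intro openin_Int) auto
  moreover have "S \<subseteq> \<Union>(U ` S)" using pq compactin_subset_topspace[OF S] by (fastforce simp: U_def)
  ultimately obtain F where F: "finite F" "F \<subseteq> S" "S \<subseteq> \<Union>(U ` F)"
    using S unfolding compactin_def by (metis (no_types, lifting) finite_subset_image imageE)
  define \<delta> where "\<delta> = Min (insert 1 ((\<lambda>v. q v - p v) ` F))"
  have \<delta>: "\<delta> > 0" "\<And>v. v \<in> F \<Longrightarrow> \<delta> \<le> q v - p v"
    using F pq by (auto simp: \<delta>_def)
  moreover have "ereal (f y + \<delta>) \<le> g y" if y: "y \<in> S" for y
  proof -
    obtain v where v: "v \<in> F" "ereal (q v) < g y" "f y < p v" using F(3) y by (auto simp: U_def)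
    then have "ereal (f y + \<delta>) \<le> ereal (q v)" using \<delta>(2)[OF v(1)] by simp
    then show ?thesis by (rule order_trans[OF _ less_imp_le[OF v(2)]])
  qed
  ultimately show ?thesis using \<delta>(1) by blast
qed

lemma continuous_map_lin_top_linear_combination:
  assumes T: "lin_top T" and E: "finite E"
  shows "continuous_map (product_topology (\<lambda>_. euclideanreal) UNIV) T (\<lambda>c. \<Sum>b\<in>E. c b *\<^sub>R b)"
  using E
proof (induction E rule: finite_induct)
  case empty
  then show ?case using lin_top_topspace[OF T] by simp
next
  case (insert b E)
  have "continuous_map (product_topology (\<lambda>_. euclideanreal) UNIV) T (\<lambda>c. c b *\<^sub>R b)"
    using continuous_map_lin_top_scaleR[OF T continuous_map_product_projection[of b UNIV], of "\<lambda>_. b"]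
    by (simp add: lin_top_topspace[OF T])
  then show ?case using insert continuous_map_lin_top_add[OF T] by simp
qed

definition basis_l1_norm :: "'a::real_vector set \<Rightarrow> 'a \<Rightarrow> real" where
  "basis_l1_norm E x = (\<Sum>b\<in>E. \<bar>representation E x b\<bar>)"

locale finite_basis =
  fixes E :: "'a::real_vector set"
  assumes finite: "finite E" and independent: "independent E" and span: "span E = UNIV"
    and nonempty: "E \<noteq> {}"
begin

lemma sum_representation: "(\<Sum>b\<in>E. representation E x b *\<^sub>R b) = x"
  by (rule sum_representation_eq[OF independent _ finite]) (auto simp: span)

lemma representation_sum_basis:
  assumes "\<And>b. b \<notin> E \<Longrightarrow> c b = 0"
  shows "representation E (\<Sum>b\<in>E. c b *\<^sub>R b) = c"
proof (rule representation_eqI[OF independent])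
  show "(\<Sum>b\<in>E. c b *\<^sub>R b) \<in> span E" by (simp add: span)
  show "c b \<noteq> 0 \<Longrightarrow> b \<in> E" for b using assms by blast
  show "finite {b. c b \<noteq> 0}" using assms by (blast intro: finite_subset[OF _ finite])
  show "(\<Sum>b | c b \<noteq> 0. c b *\<^sub>R b) = (\<Sum>b\<in>E. c b *\<^sub>R b)"
    using assms by (intro sum.mono_neutral_left finite) auto
qed

lemma abs_representation_le: "b \<in> E \<Longrightarrow> \<bar>representation E x b\<bar> \<le> basis_l1_norm E x"
  unfolding basis_l1_norm_def by (rule member_le_sum[OF _ _ finite]) auto

lemma is_norm_basis_l1_norm: "is_norm (basis_l1_norm E)"
  unfolding is_norm_def
proof (intro conjI allI impI)
  have rep_add: "representation E (x + y) = (\<lambda>b. representation E x b + representation E y b)" for x y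
    by (rule representation_add[OF independent]) (auto simp: span)
  show "basis_l1_norm E (x + y) \<le> basis_l1_norm E x + basis_l1_norm E y" for x y
    unfolding basis_l1_norm_def rep_add sum.distrib[symmetric] by (intro sum_mono abs_triangle_ineq)
  have rep_scale: "representation E (c *\<^sub>R x) = (\<lambda>b. c * representation E x b)" for c x
    by (rule representation_scale[OF independent]) (auto simp: span)
  show "basis_l1_norm E (c *\<^sub>R x) = \<bar>c\<bar> * basis_l1_norm E x" for c x
    unfolding basis_l1_norm_def rep_scale by (simp add: abs_mult sum_distrib_left)
  show "x = 0" if "basis_l1_norm E x = 0" for x
  proof -
    have "\<forall>b\<in>E. representation E x b = 0"
      using that by (simp add: basis_l1_norm_def sum_nonneg_eq_0_iff[OF finite])
    then show ?thesis using sum_representation[of x] by simp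
  qed
qed

sublocale l1: vector_norm "basis_l1_norm E"
  by (rule vector_norm.intro[OF is_norm_basis_l1_norm])

lemma compactin_unit_sphere:
  assumes T: "lin_top T"
  shows "compactin T {x. basis_l1_norm E x = 1}"
proof -
  let ?P = "product_topology (\<lambda>_::'a. euclideanreal) UNIV"
  define C where "C = {c :: 'a \<Rightarrow> real. (\<Sum>b\<in>E. \<bar>c b\<bar>) = 1}
    \<inter> PiE UNIV (\<lambda>b. if b \<in> E then {-1..1} else {0})"
  have "continuous_map ?P euclideanreal (\<lambda>c. \<Sum>b\<in>E. \<bar>c b\<bar>)"
    by (intro continuous_map_sum[OF finite] continuous_map_real_abs
      continuous_map_product_projection) simp
  then have "closedin ?P {c. (\<Sum>b\<in>E. \<bar>c b\<bar>) = 1}"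
    using closedin_continuous_map_preimage[of ?P euclideanreal _ "{1}"] by simp
  then have C_compact: "compactin ?P C"
    unfolding C_def by (rule closed_Int_compactin) (simp add: compactin_PiE)
  have combination_continuous: "continuous_map ?P T (\<lambda>c. \<Sum>b\<in>E. c b *\<^sub>R b)"
    by (rule continuous_map_lin_top_linear_combination[OF T finite])
  have "(\<lambda>c. \<Sum>b\<in>E. c b *\<^sub>R b) ` C = {x. basis_l1_norm E x = 1}"
  proof (intro equalityI subsetI)
    fix x assume "x \<in> (\<lambda>c. \<Sum>b\<in>E. c b *\<^sub>R b) ` C"
    then obtain c where "c \<in> C" "x = (\<Sum>b\<in>E. c b *\<^sub>R b)" by blast
    moreover have "c b = 0" if "b \<notin> E" for b
      using \<open>c \<in> C\<close> that by (simp add: C_def PiE_iff) (metis singletonD)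
    ultimately have "representation E x = c" using representation_sum_basis by blast
    then show "x \<in> {x. basis_l1_norm E x = 1}" using \<open>c \<in> C\<close> by (simp add: basis_l1_norm_def C_def)
  next
    fix x assume x: "x \<in> {x. basis_l1_norm E x = 1}"
    have "representation E x b \<in> (if b \<in> E then {-1..1} else {0})" for b
      using x abs_representation_le[of b x] representation_ne_zero[of E x b] by (auto simp: abs_le_iff)
    then have "representation E x \<in> PiE UNIV (\<lambda>b. if b \<in> E then {-1..1} else {0})"
      by (simp add: PiE_iff)
    then have "representation E x \<in> C" using x by (simp add: C_def basis_l1_norm_def)
    moreover have "x = (\<lambda>c. \<Sum>b\<in>E. c b *\<^sub>R b) (representation E x)" using sum_representation[of x] by simp
    ultimately show "x \<in> (\<lambda>c. \<Sum>b\<in>E. c b *\<^sub>R b) ` C" by (simp only: image_eqI)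
  qed
  then show ?thesis using image_compactin[OF C_compact combination_continuous] by simp
qed

lemma norm_ball_subset_nhd:
  assumes T: "hlcs T" and V: "openin T V" "0 \<in> V"
  obtains e where "e > 0" "\<And>y. basis_l1_norm E y < e \<Longrightarrow> y \<in> V"
proof -
  have lt: "lin_top T" using T by (simp add: hlcs_def)
  obtain V' where V': "openin T V'" "0 \<in> V'" "convex V'" "V' \<subseteq> V"
    by (rule hlcs_symmetric_convex_nhd[OF T V]) blast
  have "\<forall>b\<in>E. \<exists>e>0. \<forall>t. \<bar>t\<bar> < e \<longrightarrow> t *\<^sub>R b \<in> V'"
    using lin_top_small_multiples_in_nhd[OF lt V'(1,2)] by blast
  then obtain e where e: "\<And>b. b \<in> E \<Longrightarrow> e b > 0" "\<And>b t. b \<in> E \<Longrightarrow> \<bar>t\<bar> < e b \<Longrightarrow> t *\<^sub>R b \<in> V'"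
    by metis
  define n where "n = real (card E)"
  have n: "n > 0" using finite nonempty by (simp add: n_def card_gt_0_iff)
  define e0 where "e0 = Min (e ` E)"
  have e0: "e0 > 0" unfolding e0_def using finite nonempty e(1) by (subst Min_gr_iff) auto
  have e0_le: "e0 \<le> e b" if "b \<in> E" for b unfolding e0_def using finite that by (intro Min_le) auto
  \<comment> \<open>y is the barycentre of the points n c_b b, each of which lies in V'.\<close>
  have "y \<in> V'" if y: "basis_l1_norm E y < e0 / n" for y
  proof -
    let ?c = "representation E y"
    have "(n * ?c b) *\<^sub>R b \<in> V'" if b: "b \<in> E" for b
    proof (rule e(2)[OF b])
      have "n * basis_l1_norm E y < e0" using y n by (simp add: field_simps)
      then have "n * \<bar>?c b\<bar> < e0"
        using mult_left_mono[OF abs_representation_le[OF b, of y], of n] n by linarith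
      then show "\<bar>n * ?c b\<bar> < e b" using e0_le[OF b] n by (simp add: abs_mult)
    qed
    then have "(\<Sum>b\<in>E. (1 / n) *\<^sub>R ((n * ?c b) *\<^sub>R b)) \<in> V'"
      using n by (intro convex_sum[OF finite V'(3)]) (auto simp: n_def)
    moreover have "(\<Sum>b\<in>E. (1 / n) *\<^sub>R ((n * ?c b) *\<^sub>R b)) = (\<Sum>b\<in>E. ?c b *\<^sub>R b)"
      using n by (intro sum.cong) simp_all
    ultimately show ?thesis by (simp only: sum_representation)
  qed
  then show ?thesis using that[of "e0 / n"] e0 n V'(4) by auto
qed

lemma nhd_subset_norm_ball:
  assumes T: "hlcs T"
  obtains V where "openin T V" "0 \<in> V" "\<And>v. v \<in> V \<Longrightarrow> basis_l1_norm E v < 1"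
proof -
  have lt: "lin_top T" using T by (simp add: hlcs_def)
  let ?S = "{x. basis_l1_norm E x = 1}"
  have "closedin T ?S"
    using T compactin_imp_closedin compactin_unit_sphere[OF lt] by (auto simp: hlcs_def)
  then have "openin T (UNIV - ?S)" using openin_diff[OF openin_topspace] lin_top_topspace[OF lt] by metis
  moreover have "0 \<in> UNIV - ?S" by simp
  ultimately obtain V where V: "openin T V" "0 \<in> V" "convex V" "V \<subseteq> UNIV - ?S"
    by (rule hlcs_symmetric_convex_nhd[OF T]) blast
  \<comment> \<open>A point of V outside the open unit ball could be shrunk, within V, onto the unit sphere.\<close>
  have V_small: "basis_l1_norm E v < 1" if v: "v \<in> V" for v
  proof (rule ccontr)
    let ?\<nu> = "basis_l1_norm E v"
    assume "\<not> ?\<nu> < 1"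
    then have "0 \<le> 1 / ?\<nu>" "1 / ?\<nu> \<le> 1" by simp_all
    then have "(1 / ?\<nu>) *\<^sub>R v + (1 - 1 / ?\<nu>) *\<^sub>R 0 \<in> V"
      using v V(2) by (intro convexD[OF V(3)]) simp_all
    then have "(1 / ?\<nu>) *\<^sub>R v \<in> V" by simp
    moreover have "basis_l1_norm E ((1 / ?\<nu>) *\<^sub>R v) = 1" using \<open>\<not> ?\<nu> < 1\<close> by (simp add: l1.scale)
    ultimately show False using V(4) by blast
  qed
  show ?thesis using that[OF V(1,2) V_small] .
qed

lemma topology_eq_norm_top:
  assumes T: "hlcs T"
  shows "T = norm_top (basis_l1_norm E)"
  unfolding topology_eq
proof (intro allI iffI)
  have lt: "lin_top T" using T by (simp add: hlcs_def)
  fix U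
  show "openin (norm_top (basis_l1_norm E)) U" if U: "openin T U"
    unfolding l1.openin_norm_top
  proof
    fix x assume "x \<in> U"
    have "openin T {u. 1 *\<^sub>R u + x \<in> U}" by (rule openin_lin_top_affine_preimage[OF lt U])
    then obtain e where "e > 0" "\<And>y. basis_l1_norm E y < e \<Longrightarrow> 1 *\<^sub>R y + x \<in> U"
      using norm_ball_subset_nhd[OF T] \<open>x \<in> U\<close>
        by (metis (no_types, lifting) add_0 mem_Collect_eq scaleR_one)
    then show "\<exists>e>0. \<forall>y. basis_l1_norm E (y - x) < e \<longrightarrow> y \<in> U" by (metis diff_add_cancel scaleR_one)
  qed
  show "openin T U" if U: "openin (norm_top (basis_l1_norm E)) U"
  proof (subst openin_subopen, intro ballI)
    fix x assume "x \<in> U"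
    then obtain e where "e > 0" and e: "\<And>y. basis_l1_norm E (y - x) < e \<Longrightarrow> y \<in> U"
      using U unfolding l1.openin_norm_top by blast
    obtain V where V: "openin T V" "0 \<in> V" "\<And>v. v \<in> V \<Longrightarrow> basis_l1_norm E v < 1"
      using nhd_subset_norm_ball[OF T] by blast
    define W where "W = {y. (1 / e) *\<^sub>R y + (- (1 / e) *\<^sub>R x) \<in> V}"
    have "W \<subseteq> U"
    proof
      fix y assume "y \<in> W"
      then have "(1 / e) *\<^sub>R (y - x) \<in> V" by (simp add: W_def scaleR_diff_right)
      then have "basis_l1_norm E ((1 / e) *\<^sub>R (y - x)) < 1" by (rule V(3))
      then have "\<bar>1 / e\<bar> * basis_l1_norm E (y - x) < 1" by (simp only: l1.scale)
      then have "basis_l1_norm E (y - x) < e" using \<open>e > 0\<close> by (simp add: field_simps)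
      then show "y \<in> U" by (rule e)
    qed
    moreover have "openin T W" unfolding W_def by (rule openin_lin_top_affine_preimage[OF lt V(1)])
    moreover have "x \<in> W" using V(2) by (simp add: W_def)
    ultimately show "\<exists>W. openin T W \<and> x \<in> W \<and> W \<subseteq> U" by blast
  qed
qed

end

context lsc_sublinear
begin

lemma coercive_if_below_eq_zero_finite_basis:
  assumes E: "finite_basis E" and xs: "xs \<in> dual T" and below: "below g xs = {0}"
  shows "\<exists>\<alpha>>0. \<forall>x. ereal (\<alpha> * basis_l1_norm E x) \<le> g x - ereal (xs x)"
proof -
  interpret finite_basis E by (rule E)
  have on_sphere: "ereal (xs v) < g v" if "v \<in> {x. basis_l1_norm E x = 1}" for v
  proof -
    have "v \<noteq> 0" using that by auto
    then have "v \<notin> below g xs" using below by blast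
    then show ?thesis by (simp add: below_def not_le)
  qed
  obtain \<delta> where "\<delta> > 0" and \<delta>: "\<And>v. basis_l1_norm E v = 1 \<Longrightarrow> ereal (xs v + \<delta>) \<le> g v"
    using compactin_lsc_gap[OF compactin_unit_sphere[OF lin_top] openin_superlevel dual_continuous[OF xs]
        on_sphere]
    by blast
  \<comment> \<open>Both sides are positively homogeneous, so the gap on the unit sphere propagates.\<close>
  have "ereal (\<delta> * basis_l1_norm E x) \<le> g x - ereal (xs x)" for x
  proof (cases "x = 0")
    case True
    then show ?thesis using zero linear_0[OF dual_linear[OF xs]] by simp
  next
    case False
    let ?\<nu> = "basis_l1_norm E x"
    have "?\<nu> \<noteq> 0" using False l1.eq_0_imp by blast
    then have "?\<nu> > 0" using l1.nonneg[of x] by linarith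
    define v where "v = (1 / ?\<nu>) *\<^sub>R x"
    have v: "basis_l1_norm E v = 1" "x = ?\<nu> *\<^sub>R v" using \<open>?\<nu> > 0\<close> by (simp_all add: v_def l1.scale)
    have "ereal (?\<nu> * (xs v + \<delta>)) \<le> ereal ?\<nu> * g v"
      using ereal_mult_left_mono[OF \<delta>[OF v(1)], of "ereal ?\<nu>"] \<open>?\<nu> > 0\<close> by simp
    also have "\<dots> = g x" using scale[OF \<open>?\<nu> > 0\<close>, of v] v(2) by simp
    finally have "ereal (xs x + \<delta> * ?\<nu>) \<le> g x"
      using linear_scale[OF dual_linear[OF xs], of ?\<nu> v] v(2) by (simp add: algebra_simps)
    then show ?thesis by (cases "g x") (auto simp: algebra_simps)
  qed
  then show ?thesis using \<open>\<delta> > 0\<close> by blast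
qed

end

lemma finite_basis_if_finite_span:
  fixes B :: "'a::real_vector set"
  assumes "finite B" "span B = UNIV" "\<exists>x::'a. x \<noteq> 0"
  shows "\<exists>E :: 'a set. finite_basis E"
proof -
  obtain E where E: "E \<subseteq> B" "independent E" "B \<subseteq> span E" by (rule maximal_independent_subset)
  then have "span E = UNIV" using assms(2) span_mono[OF E(3)] by (simp add: span_span top_unique)
  moreover have "E \<noteq> {}" using assms(3) \<open>span E = UNIV\<close> by auto
  ultimately have "finite_basis E"
    using E(2) finite_subset[OF E(1) assms(1)] by (intro finite_basis.intro) auto
  then show ?thesis by blast
qed

lemma coercive_iff_dual_norm_ball_subset_subdiff0:
  assumes xs: "xs \<in> dual T"
  shows "(\<exists>N. is_norm N \<and> T = norm_top N \<and> (\<exists>\<alpha>>0. \<forall>x. g x - ereal (xs x) \<ge> ereal (\<alpha> * N x)))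
    \<longleftrightarrow> (\<exists>N. is_norm N \<and> T = norm_top N \<and>
          (\<exists>r>0. \<forall>h\<in>dual T. dual_norm N (\<lambda>x. h x - xs x) < r \<longrightarrow> h \<in> subdiff0 T g))"
proof
  assume "\<exists>N. is_norm N \<and> T = norm_top N \<and> (\<exists>\<alpha>>0. \<forall>x. g x - ereal (xs x) \<ge> ereal (\<alpha> * N x))"
  then obtain N \<alpha> where N: "is_norm N" "T = norm_top N" "\<alpha> > 0"
    "\<And>x. g x - ereal (xs x) \<ge> ereal (\<alpha> * N x)"
    by blast
  then show "\<exists>N. is_norm N \<and> T = norm_top N \<and>
      (\<exists>r>0. \<forall>h\<in>dual T. dual_norm N (\<lambda>x. h x - xs x) < r \<longrightarrow> h \<in> subdiff0 T g)"
    using vector_norm.dual_norm_ball_subset_subdiff0_if_coercive[OF vector_norm.intro[OF N(1)], of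
      xs \<alpha> g] xs
    by auto
next
  assume "\<exists>N. is_norm N \<and> T = norm_top N \<and>
      (\<exists>r>0. \<forall>h\<in>dual T. dual_norm N (\<lambda>x. h x - xs x) < r \<longrightarrow> h \<in> subdiff0 T g)"
  then obtain N r where N: "is_norm N" "T = norm_top N" "r > 0"
    "\<And>h. h \<in> dual T \<Longrightarrow> dual_norm N (\<lambda>x. h x - xs x) < r \<Longrightarrow> h \<in> subdiff0 T g"
    by blast
  then have "\<forall>x. g x - ereal (xs x) \<ge> ereal (r / 2 * N x)"
    using vector_norm.coercive_if_dual_norm_ball_subset_subdiff0[OF vector_norm.intro[OF N(1)], of
      xs r g] xs
    by auto
  then show "\<exists>N. is_norm N \<and> T = norm_top N \<and> (\<exists>\<alpha>>0. \<forall>x. g x - ereal (xs x) \<ge> ereal (\<alpha> * N x))"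
    using N(1-3) half_gt_zero by blast
qed

lemma interior_of_if_dual_norm_ball_subset:
  assumes xs: "xs \<in> dual T"
    and "\<exists>N. is_norm N \<and> T = norm_top N \<and>
      (\<exists>r>0. \<forall>h\<in>dual T. dual_norm N (\<lambda>x. h x - xs x) < r \<longrightarrow> h \<in> B)"
  shows "\<exists>\<tau>. dual_lin_top T \<tau> \<and> xs \<in> \<tau> interior_of B"
proof -
  obtain N r where N: "is_norm N" "T = norm_top N" and "r > 0"
    and ball: "\<forall>h\<in>dual T. dual_norm N (\<lambda>x. h x - xs x) < r \<longrightarrow> h \<in> B"
    using assms(2) by blast
  interpret vector_norm N by (rule vector_norm.intro[OF N(1)])
  show ?thesis
    using dual_lin_top_dual_norm_topology mem_interior_if_dual_norm_ball_subset[of xs r B] xs \<open>r >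
      0\<close> ball N(2)
    by auto
qed

lemma (in lsc_sublinear) coercive_if_below_eq_zero_finite_dim:
  assumes "finite (B :: 'a set)" "span B = UNIV" "\<exists>x::'a. x \<noteq> 0" "xs \<in> dual T" "below g xs = {0}"
  shows "\<exists>N. is_norm N \<and> T = norm_top N \<and> (\<exists>\<alpha>>0. \<forall>x. g x - ereal (xs x) \<ge> ereal (\<alpha> * N x))"
proof -
  obtain E :: "'a set" where E: "finite_basis E"
    using finite_basis_if_finite_span[OF assms(1-3)] by blast
  then show ?thesis
    using finite_basis.topology_eq_norm_top[OF E hlcs] finite_basis.is_norm_basis_l1_norm[OF E]
      coercive_if_below_eq_zero_finite_basis[OF E assms(4,5)] by auto
qed

theorem proposition10:
  fixes T :: "'a::real_vector topology" and g :: "'a \<Rightarrow> ereal" and xs :: "'a \<Rightarrow> real"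
  assumes "hlcs T" and "\<exists>x::'a. x \<noteq> 0" and "Gamma T g" and "sublinear g" and "xs \<in> dual T"
  shows "let
     P1 = (below g xs = {0});
     P2 = (xs \<in> qi T (subdiff0 T g));
     P3 = (xs \<in> core_in (dual T) (subdiff0 T g));
     P4 = (\<exists>\<tau>. dual_lin_top T \<tau> \<and> xs \<in> \<tau> interior_of subdiff0 T g);
     P5 = (\<exists>N. is_norm N \<and> T = norm_top N \<and>
             (\<exists>r>0. \<forall>h\<in>dual T. dual_norm N (\<lambda>x. h x - xs x) < r \<longrightarrow> h \<in> subdiff0 T g));
     P6 = (\<exists>N. is_norm N \<and> T = norm_top N \<and>
             (\<exists>\<alpha>>0. \<forall>x. g x - ereal (xs x) \<ge> ereal (\<alpha> * N x)))
   in (P6 \<longleftrightarrow> P5) \<and> (P5 \<longrightarrow> P4) \<and> (P4 \<longrightarrow> P3) \<and> (P3 \<longrightarrow> P2) \<and> (P2 \<longleftrightarrow> P1)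
      \<and> ((\<exists>B::'a set. finite B \<and> span B = UNIV) \<longrightarrow> P1 \<longrightarrow> P6)"
proof -
  interpret lsc_sublinear T g by (rule lsc_sublinear.intro) (use assms in auto)
  show ?thesis
    unfolding Let_def
    apply (intro conjI impI)
    subgoal by (rule coercive_iff_dual_norm_ball_subset_subdiff0[OF assms(5)])
    subgoal by (erule interior_of_if_dual_norm_ball_subset[OF assms(5)])
    subgoal by (elim exE conjE) (rule core_in_if_interior_of)
    subgoal by (erule qi_if_core_in[OF subdiff0_subset_dual])
    subgoal by (rule iffI) (erule below_eq_zero_if_qi, erule qi_if_below_eq_zero[OF assms(5)])
    subgoal by (elim exE conjE) (rule coercive_if_below_eq_zero_finite_dim[OF _ _ assms(2,5)])
    done
qed

end
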